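(* Let $T$ be a countable tree without leaves (vertices of infinite degree allowed) with root $o$, $P=(p(x,y))$ a stochastic nearest-neighbour transition matrix on $T$, and $\lambda\in\mathbb C$. Suppose the oriented edges carry $\lambda$-weights $f(x,y)$ satisfying for every vertex $x$ and neighbour $y$: (i) $f(x,y)f(y,x)\ne1$; (ii) $u(x,x)=\sum_{v\sim x}p(x,v)f(v,x)$ converges absolutely and $u(x,x)\ne\lambda$; (iii) $\lambda f(x,y)=p(x,y)+(u(x,x)-p(x,y)f(y,x))f(x,y)$; extend $f$ by $f(x,x)=1$ and multiplicatively along geodesics, and let $k(x,w)=f(x,x\wedge w)/f(o,x\wedge w)$. Then a function $h:T\to\mathbb C$ satisfies $Ph=\lambda h$ (i.e. $\sum_{y\sim x}p(x,y)h(y)$ converges absolutely and equals $\lambda h(x)$ for all $x$) if and only if it is of the form $h(x)=\int_{\partial T}k(x,\xi)\,d\nu(\xi)$ for a strong complex distribution $\nu$ on $\partial T$. The distribution $\nu$ is determined by $h$: $\nu=\nu^h$, where $$\nu^h(\partial T)=h(o),\qquad \nu^h(\partial T_x)=f(o,x)\,\frac{h(x)-f(x,x^-)h(x^-)}{1-f(x^-,x)f(x,x^-)}\quad (x\ne o).$$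
   Context: Nearest-neighbour stochastic: $p(x,y)>0$ iff $x\sim y$, rows sum to $1$. $\pi(x,y)$ is the geodesic from $x$ to $y$. Ends: equivalence classes of rays (non-backtracking infinite paths, equivalent if they differ by finitely many initial vertices); $\partial T$ is the set of ends. $T_x$ is the subtree spanned by all $w$ with $x\in\pi(o,w)$; $\partial T_x$ the set of ends with a representative ray in $T_x$; $\partial T_o=\partial T$. For $x\ne o$, $x^-$ is the neighbour of $x$ on $\pi(o,x)$. The confluent $v\wedge w$ is the last common element of $\pi(o,v)$ and $\pi(o,w)$. A distribution on $\partial T$ is a complex finitely additive set function on the algebra of finite disjoint unions of sets $\partial T_x\setminus\bigcup_{y\in S}\partial T_y$ ($S$ a finite set of vertices $y$ with $y^-=x$); integrals of locally constant functions $\varphi=\sum c_i\mathbf 1_{A_i}$ (disjoint $A_i$ in this algebra) are $\sum c_i\nu(A_i)$. It is strong if for each $x$, $\sum_{y:y^-=x}\nu(\partial T_y)$ converges absolutely (to $\nu(\partial T_x)$). For each $x$, $\xi\mapsto k(x,\xi)$ is locally constant. *)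

theory Defs
  imports "HOL-Analysis.Analysis"
begin

definition is_path :: "('a \<Rightarrow> 'a \<Rightarrow> bool) \<Rightarrow> 'a list \<Rightarrow> bool" where
  "is_path E xs \<longleftrightarrow> xs \<noteq> [] \<and> distinct xs \<and>
     (\<forall>i. Suc i < length xs \<longrightarrow> E (xs ! i) (xs ! Suc i))"

definition is_tree :: "('a \<Rightarrow> 'a \<Rightarrow> bool) \<Rightarrow> bool" where
  "is_tree E \<longleftrightarrow> (\<forall>x y. E x y \<longrightarrow> E y x) \<and> (\<forall>x. \<not> E x x) \<and>
     (\<forall>x y. \<exists>!xs. is_path E xs \<and> hd xs = x \<and> last xs = y)"

definition no_leaves :: "('a \<Rightarrow> 'a \<Rightarrow> bool) \<Rightarrow> bool" where
  "no_leaves E \<longleftrightarrow> (\<forall>x. \<exists>y z. E x y \<and> E x z \<and> y \<noteq> z)"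

definition geod :: "('a \<Rightarrow> 'a \<Rightarrow> bool) \<Rightarrow> 'a \<Rightarrow> 'a \<Rightarrow> 'a list" where
  "geod E x y = (THE xs. is_path E xs \<and> hd xs = x \<and> last xs = y)"

text \<open>\<open>x\<^sup>-\<close>: neighbour of x on \<open>\<pi>(o,x)\<close> (meaningful for x \<noteq> o).\<close>
definition pred_v :: "('a \<Rightarrow> 'a \<Rightarrow> bool) \<Rightarrow> 'a \<Rightarrow> 'a \<Rightarrow> 'a" where
  "pred_v E r x = last (butlast (geod E r x))"

definition children :: "('a \<Rightarrow> 'a \<Rightarrow> bool) \<Rightarrow> 'a \<Rightarrow> 'a \<Rightarrow> 'a set" where
  "children E r x = {y. y \<noteq> r \<and> pred_v E r y = x}"

definition Tsub :: "('a \<Rightarrow> 'a \<Rightarrow> bool) \<Rightarrow> 'a \<Rightarrow> 'a \<Rightarrow> 'a set" where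
  "Tsub E r x = {w. x \<in> set (geod E r w)}"

definition is_ray :: "('a \<Rightarrow> 'a \<Rightarrow> bool) \<Rightarrow> (nat \<Rightarrow> 'a) \<Rightarrow> bool" where
  "is_ray E s \<longleftrightarrow> (\<forall>n. E (s n) (s (Suc n)) \<and> s (Suc (Suc n)) \<noteq> s n)"

definition ray_equiv :: "(nat \<Rightarrow> 'a) \<Rightarrow> (nat \<Rightarrow> 'a) \<Rightarrow> bool" where
  "ray_equiv s t \<longleftrightarrow> (\<exists>k l. \<forall>n. s (n + k) = t (n + l))"

definition ends :: "('a \<Rightarrow> 'a \<Rightarrow> bool) \<Rightarrow> (nat \<Rightarrow> 'a) set set" where
  "ends E = {{t. is_ray E t \<and> ray_equiv s t} | s. is_ray E s}"

definition bdT :: "('a \<Rightarrow> 'a \<Rightarrow> bool) \<Rightarrow> 'a \<Rightarrow> 'a \<Rightarrow> (nat \<Rightarrow> 'a) set set" where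
  "bdT E r x = {\<xi> \<in> ends E. \<exists>s\<in>\<xi>. \<forall>n. s n \<in> Tsub E r x}"

text \<open>Confluent \<open>x \<and> \<xi>\<close> of a vertex and an end: the last vertex of \<open>\<pi>(o,x)\<close>
  lying on the ray from o to \<xi> (equivalently, v with \<xi> \<in> \<partial>T_v).\<close>
definition confl_end :: "('a \<Rightarrow> 'a \<Rightarrow> bool) \<Rightarrow> 'a \<Rightarrow> 'a \<Rightarrow> (nat \<Rightarrow> 'a) set \<Rightarrow> 'a" where
  "confl_end E r x \<xi> = last (takeWhile (\<lambda>v. \<xi> \<in> bdT E r v) (geod E r x))"

definition basic_sets :: "('a \<Rightarrow> 'a \<Rightarrow> bool) \<Rightarrow> 'a \<Rightarrow> (nat \<Rightarrow> 'a) set set set" where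
  "basic_sets E r = {bdT E r x - (\<Union>y\<in>S. bdT E r y) | x S. finite S \<and> S \<subseteq> children E r x}"

definition end_algebra :: "('a \<Rightarrow> 'a \<Rightarrow> bool) \<Rightarrow> 'a \<Rightarrow> (nat \<Rightarrow> 'a) set set set" where
  "end_algebra E r = {\<Union>F | F. finite F \<and> F \<subseteq> basic_sets E r \<and> pairwise disjnt F}"

text \<open>A (complex) distribution: finitely additive on the algebra (values
  outside the algebra are irrelevant).\<close>
definition is_distribution ::
  "('a \<Rightarrow> 'a \<Rightarrow> bool) \<Rightarrow> 'a \<Rightarrow> ((nat \<Rightarrow> 'a) set set \<Rightarrow> complex) \<Rightarrow> bool" where
  "is_distribution E r \<nu> \<longleftrightarrow>
     (\<forall>A\<in>end_algebra E r. \<forall>B\<in>end_algebra E r. A \<inter> B = {} \<longrightarrow> \<nu> (A \<union> B) = \<nu> A + \<nu> B)"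

definition strong_distribution ::
  "('a \<Rightarrow> 'a \<Rightarrow> bool) \<Rightarrow> 'a \<Rightarrow> ((nat \<Rightarrow> 'a) set set \<Rightarrow> complex) \<Rightarrow> bool" where
  "strong_distribution E r \<nu> \<longleftrightarrow> is_distribution E r \<nu> \<and>
     (\<forall>x. ((\<lambda>y. norm (\<nu> (bdT E r y))) summable_on children E r x) \<and>
          HAS_SUM (\<lambda>y. \<nu> (bdT E r y)) (children E r x) (\<nu> (bdT E r x)))"

definition adapted_partition ::
  "('a \<Rightarrow> 'a \<Rightarrow> bool) \<Rightarrow> 'a \<Rightarrow> ((nat \<Rightarrow> 'a) set \<Rightarrow> complex) \<Rightarrow> (nat \<Rightarrow> 'a) set set set \<Rightarrow> bool" where
  "adapted_partition E r \<phi> P \<longleftrightarrow> finite P \<and> P \<subseteq> end_algebra E r \<and> pairwise disjnt P \<and>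
     \<Union>P = ends E \<and> (\<forall>A\<in>P. \<forall>\<xi>\<in>A. \<forall>\<eta>\<in>A. \<phi> \<xi> = \<phi> \<eta>)"

definition dist_integral ::
  "('a \<Rightarrow> 'a \<Rightarrow> bool) \<Rightarrow> 'a \<Rightarrow> ((nat \<Rightarrow> 'a) set set \<Rightarrow> complex) \<Rightarrow> ((nat \<Rightarrow> 'a) set \<Rightarrow> complex) \<Rightarrow> complex" where
  "dist_integral E r \<nu> \<phi> =
     (let P = (SOME P. adapted_partition E r \<phi> P) in \<Sum>A\<in>P. \<phi> (SOME \<xi>. \<xi> \<in> A) * \<nu> A)"

definition fext :: "('a \<Rightarrow> 'a \<Rightarrow> bool) \<Rightarrow> ('a \<Rightarrow> 'a \<Rightarrow> complex) \<Rightarrow> 'a \<Rightarrow> 'a \<Rightarrow> complex" where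
  "fext E f x y = (let xs = geod E x y in prod_list (map (\<lambda>(a, b). f a b) (zip xs (tl xs))))"

definition uval :: "('a \<Rightarrow> 'a \<Rightarrow> bool) \<Rightarrow> ('a \<Rightarrow> 'a \<Rightarrow> real) \<Rightarrow> ('a \<Rightarrow> 'a \<Rightarrow> complex) \<Rightarrow> 'a \<Rightarrow> complex" where
  "uval E p f x = (\<Sum>\<^sub>\<infinity>v\<in>{v. E x v}. complex_of_real (p x v) * f v x)"

definition kernel :: "('a \<Rightarrow> 'a \<Rightarrow> bool) \<Rightarrow> 'a \<Rightarrow> ('a \<Rightarrow> 'a \<Rightarrow> complex) \<Rightarrow> 'a \<Rightarrow> (nat \<Rightarrow> 'a) set \<Rightarrow> complex" where
  "kernel E r f x \<xi> = fext E f x (confl_end E r x \<xi>) / fext E f r (confl_end E r x \<xi>)"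

definition is_eigenfunction ::
  "('a \<Rightarrow> 'a \<Rightarrow> bool) \<Rightarrow> ('a \<Rightarrow> 'a \<Rightarrow> real) \<Rightarrow> complex \<Rightarrow> ('a \<Rightarrow> complex) \<Rightarrow> bool" where
  "is_eigenfunction E p lam h \<longleftrightarrow>
     (\<forall>x. ((\<lambda>y. norm (complex_of_real (p x y) * h y)) summable_on {y. E x y}) \<and>
          (\<Sum>\<^sub>\<infinity>y\<in>{y. E x y}. complex_of_real (p x y) * h y) = lam * h x)"

end

theory Submission
  imports Defs
begin

text \<open>
  A strong distribution \<open>\<nu>\<close> is determined by the flow \<open>\<mu>(x) = \<nu>(\<partial>T\<^sub>x)\<close>, which satisfies
  \<open>\<mu>(x) = \<Sum> \<mu>(y)\<close> over the children \<open>y\<close> of \<open>x\<close>, absolutely; conversely every such flow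
  extends to a finitely additive \<open>\<nu>\<close>, the mass of an atom of a finite subtree being \<open>\<mu>\<close> of
  its vertex minus \<open>\<mu>\<close> of its children in the subtree. The integral of \<open>k(x,\<cdot>)\<close> only sees
  the atoms of the root path of \<open>x\<close>, which makes \<open>h = \<integral> k(\<cdot>,\<xi>) d\<nu>(\<xi>)\<close> an explicit linear
  function of \<open>\<mu>\<close>; it is inverted by the recursion
  \<open>h(x) = f(x,x\<^sup>-) h(x\<^sup>-) + \<mu>(x) (1/f(o,x) - f(x,x\<^sup>-)/f(o,x\<^sup>-))\<close>, which yields the formula
  for \<open>\<nu>\<^sup>h\<close>. By the edge equation (iii), \<open>Ph = \<lambda>h\<close> at \<open>x\<close> is then equivalent to the flow
  condition for \<open>\<mu>\<close> at \<open>x\<close>.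
\<close>

lemma is_path_take: "is_path E xs \<Longrightarrow> 0 < n \<Longrightarrow> is_path E (take n xs)"
  unfolding is_path_def by auto

lemma is_path_drop: "is_path E xs \<Longrightarrow> n < length xs \<Longrightarrow> is_path E (drop n xs)"
  unfolding is_path_def by auto

lemma is_path_snoc: "is_path E xs \<Longrightarrow> E (last xs) y \<Longrightarrow> y \<notin> set xs \<Longrightarrow> is_path E (xs @ [y])"
  unfolding is_path_def
  by (auto simp: nth_append last_conv_nth less_Suc_eq) (metis diff_Suc_1 One_nat_def)

lemma zip_snoc_tl: "xs \<noteq> [] \<Longrightarrow> zip (xs @ [y]) (tl xs @ [y]) = zip xs (tl xs) @ [(last xs, y)]"
proof (induction xs)
  case (Cons a xs) then show ?case by (cases xs) auto
qed simp

section \<open>Rooted trees\<close>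

locale rooted_tree =
  fixes E :: "'a \<Rightarrow> 'a \<Rightarrow> bool" and r :: 'a
  assumes tree: "is_tree E"
begin

abbreviation rpath :: "'a \<Rightarrow> 'a list" where "rpath x \<equiv> geod E r x"
abbreviation parent :: "'a \<Rightarrow> 'a" where "parent \<equiv> pred_v E r"
abbreviation bd :: "'a \<Rightarrow> (nat \<Rightarrow> 'a) set set" where "bd \<equiv> bdT E r"

lemma adj_sym: "E x y \<Longrightarrow> E y x" using tree unfolding is_tree_def by blast
lemma adj_irrefl: "\<not> E x x" using tree unfolding is_tree_def by blast

lemma geod_spec: "is_path E (geod E x y) \<and> hd (geod E x y) = x \<and> last (geod E x y) = y"
proof -
  have "\<exists>!xs. is_path E xs \<and> hd xs = x \<and> last xs = y" using tree unfolding is_tree_def by blast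
  then show ?thesis unfolding geod_def by (rule theI')
qed

lemma geod_unique: "is_path E xs \<Longrightarrow> hd xs = x \<Longrightarrow> last xs = y \<Longrightarrow> geod E x y = xs"
proof -
  assume xs: "is_path E xs" "hd xs = x" "last xs = y"
  have "\<exists>!xs. is_path E xs \<and> hd xs = x \<and> last xs = y" using tree unfolding is_tree_def by blast
  then show ?thesis unfolding geod_def by (rule the1_equality) (use xs in auto)
qed

lemma geod_not_Nil: "geod E x y \<noteq> []" using geod_spec unfolding is_path_def by blast

lemma geod_refl: "geod E x x = [x]"
  by (rule geod_unique) (auto simp: is_path_def)

lemma geod_edge: assumes "E x y" shows "geod E x y = [x, y]"
proof -
  have "x \<noteq> y" using assms adj_irrefl by metis
  then show ?thesis using assms by (intro geod_unique) (auto simp: is_path_def less_Suc_eq)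
qed

lemma is_path_rev: assumes "is_path E xs" shows "is_path E (rev xs)"
  unfolding is_path_def
proof (intro conjI allI impI)
  show "rev xs \<noteq> []" "distinct (rev xs)" using assms unfolding is_path_def by auto
  fix i assume i: "Suc i < length (rev xs)"
  define j where "j = length xs - Suc (Suc i)"
  have j: "Suc j < length xs" "length xs - Suc i = Suc j" "length xs - Suc (Suc i) = j"
    using i unfolding j_def by auto
  have "E (xs ! j) (xs ! Suc j)" using assms j unfolding is_path_def by blast
  then show "E (rev xs ! i) (rev xs ! Suc i)" using i j by (simp add: rev_nth adj_sym)
qed

lemma is_path_rpath: "is_path E (rpath x)" using geod_spec by blast
lemma hd_rpath: "hd (rpath x) = r" using geod_spec by blast
lemma last_rpath: "last (rpath x) = x" using geod_spec by blast
lemma rpath_not_Nil: "rpath x \<noteq> []" using geod_not_Nil by blast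
lemma distinct_rpath: "distinct (rpath x)" using is_path_rpath unfolding is_path_def by blast
lemma root_in_rpath: "r \<in> set (rpath x)" using hd_rpath rpath_not_Nil hd_in_set by metis
lemma self_in_rpath: "x \<in> set (rpath x)" using last_rpath rpath_not_Nil last_in_set by metis
lemma rpath_root: "rpath r = [r]" by (rule geod_refl)

lemma rpath_nth: assumes "i < length (rpath x)" shows "rpath (rpath x ! i) = take (Suc i) (rpath x)"
proof (rule geod_unique)
  show "is_path E (take (Suc i) (rpath x))" using is_path_take[OF is_path_rpath] by auto
  show "hd (take (Suc i) (rpath x)) = r" using hd_rpath rpath_not_Nil by (simp add: hd_take)
  show "last (take (Suc i) (rpath x)) = rpath x ! i" using assms by (simp add: take_Suc_conv_app_nth)
qed

lemma ancestorE:
  assumes "v \<in> set (rpath x)"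
  obtains i where "i < length (rpath x)" "v = rpath x ! i" "rpath v = take (Suc i) (rpath x)"
  using assms rpath_nth by (metis in_set_conv_nth)

lemma rpath_ancestor_subset: "v \<in> set (rpath x) \<Longrightarrow> set (rpath v) \<subseteq> set (rpath x)"
  by (erule ancestorE) (simp add: set_take_subset)

lemma ancestor_trans: "u \<in> set (rpath v) \<Longrightarrow> v \<in> set (rpath x) \<Longrightarrow> u \<in> set (rpath x)"
  using rpath_ancestor_subset by blast

lemma ancestors_linear:
  assumes "u \<in> set (rpath w)" "v \<in> set (rpath w)" shows "u \<in> set (rpath v) \<or> v \<in> set (rpath u)"
proof -
  obtain i where i: "i < length (rpath w)" "u = rpath w ! i" "rpath u = take (Suc i) (rpath w)"
    using assms(1) by (rule ancestorE)
  obtain j where j: "j < length (rpath w)" "v = rpath w ! j" "rpath v = take (Suc j) (rpath w)"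
    using assms(2) by (rule ancestorE)
  show ?thesis
  proof (cases "i \<le> j")
    case True
    then have "u \<in> set (take (Suc j) (rpath w))" using i j by (auto simp: in_set_conv_nth intro!: exI[of _ i])
    then show ?thesis using j by simp
  next
    case False
    then have "v \<in> set (take (Suc i) (rpath w))" using i j by (auto simp: in_set_conv_nth intro!: exI[of _ j])
    then show ?thesis using i by simp
  qed
qed

lemma length_rpath_mono: "u \<in> set (rpath v) \<Longrightarrow> length (rpath u) \<le> length (rpath v)"
  by (erule ancestorE) simp

lemma ancestor_eq_if_length_eq:
  assumes "u \<in> set (rpath v)" "length (rpath u) = length (rpath v)" shows "u = v"
proof -
  obtain i where i: "i < length (rpath v)" "rpath u = take (Suc i) (rpath v)"
    using assms(1) by (rule ancestorE)
  then have "length (rpath v) \<le> Suc i" using assms(2) by simp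
  then have "rpath u = rpath v" using i(2) by simp
  then show ?thesis using last_rpath by metis
qed

lemma two_le_length_rpath: assumes "x \<noteq> r" shows "2 \<le> length (rpath x)"
proof (rule ccontr)
  assume "\<not> 2 \<le> length (rpath x)"
  moreover have "length (rpath x) \<noteq> 0" using rpath_not_Nil[of x] by simp
  ultimately have "length (rpath x) = 1" by linarith
  then have "rpath x = [r]" using hd_rpath[of x] by (cases "rpath x") auto
  then show False using assms last_rpath by (metis last_ConsL)
qed

lemma rpath_parent: assumes "x \<noteq> r" shows "rpath x = rpath (parent x) @ [x]"
proof -
  have l: "2 \<le> length (rpath x)" using two_le_length_rpath assms by blast
  have "rpath (parent x) = butlast (rpath x)"
  proof (rule geod_unique)
    show "is_path E (butlast (rpath x))"
      using is_path_take[OF is_path_rpath] l by (simp add: butlast_conv_take)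
    show "hd (butlast (rpath x)) = r" using hd_rpath l by (simp add: butlast_conv_take hd_take)
    show "last (butlast (rpath x)) = parent x" unfolding pred_v_def by simp
  qed
  then show ?thesis using last_rpath rpath_not_Nil by (metis append_butlast_last_id)
qed

lemma adj_parent: assumes "x \<noteq> r" shows "E (parent x) x"
proof -
  have e: "rpath x = rpath (parent x) @ [x]" using rpath_parent[OF assms] .
  obtain n where n: "length (rpath (parent x)) = Suc n"
    using rpath_not_Nil[of "parent x"] by (cases "rpath (parent x)") auto
  have "\<forall>i. Suc i < length (rpath x) \<longrightarrow> E (rpath x ! i) (rpath x ! Suc i)"
    using is_path_rpath unfolding is_path_def by blast
  then have "E (rpath x ! n) (rpath x ! Suc n)" using e n by simp
  moreover have "rpath x ! n = parent x"
    using e n last_rpath[of "parent x"] rpath_not_Nil[of "parent x"] by (simp add: nth_append last_conv_nth)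
  moreover have "rpath x ! Suc n = x" using e n by (simp add: nth_append)
  ultimately show ?thesis by simp
qed

lemma parent_in_rpath: "x \<noteq> r \<Longrightarrow> parent x \<in> set (rpath x)"
  using rpath_parent self_in_rpath[of "parent x"] by fastforce

lemma notin_rpath_parent: "x \<noteq> r \<Longrightarrow> x \<notin> set (rpath (parent x))"
  using rpath_parent distinct_rpath[of x] by fastforce

lemma parent_neq: "x \<noteq> r \<Longrightarrow> parent x \<noteq> x"
  using notin_rpath_parent self_in_rpath by metis

lemma length_rpath_parent: "x \<noteq> r \<Longrightarrow> length (rpath x) = Suc (length (rpath (parent x)))"
  using rpath_parent by simp

lemma children_iff: "c \<in> children E r v \<longleftrightarrow> c \<noteq> r \<and> parent c = v"
  unfolding children_def by simp

lemma adj_parent_or_child: assumes "E x y" shows "(x \<noteq> r \<and> y = parent x) \<or> y \<in> children E r x"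
proof (cases "y \<in> set (rpath x)")
  case False
  have "rpath y = rpath x @ [y]"
    by (rule geod_unique) (use False assms is_path_rpath last_rpath hd_rpath rpath_not_Nil in \<open>auto intro!: is_path_snoc\<close>)
  then have "y \<noteq> r" "parent y = x"
    using False root_in_rpath[of x] last_rpath unfolding pred_v_def by auto
  then show ?thesis unfolding children_iff by blast
next
  case True
  have yx: "y \<noteq> x" using assms adj_irrefl by blast
  have xr: "x \<noteq> r" using True yx rpath_root by auto
  have e: "rpath x = rpath (parent x) @ [x]" using rpath_parent xr by blast
  have yp: "y \<in> set (rpath (parent x))" using True yx e by auto
  have "rpath x = rpath y @ [x]"
  proof (rule geod_unique)
    have "x \<notin> set (rpath y)" using rpath_ancestor_subset[OF yp] notin_rpath_parent[OF xr] by blast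
    then show "is_path E (rpath y @ [x])"
      using is_path_rpath last_rpath adj_sym[OF assms] by (auto intro!: is_path_snoc)
  qed (use hd_rpath rpath_not_Nil in auto)
  then have "y = parent x" using e last_rpath by (metis append1_eq_conv)
  then show ?thesis using xr by blast
qed

lemma rpath_child: "c \<in> children E r v \<Longrightarrow> rpath c = rpath v @ [c]"
  using rpath_parent unfolding children_iff by blast

lemma adj_child: "c \<in> children E r v \<Longrightarrow> E v c"
  using adj_parent unfolding children_iff by blast

lemma parent_in_adj: "x \<noteq> r \<Longrightarrow> parent x \<in> {y. E x y}"
  using adj_parent adj_sym by blast

lemma length_rpath_child: "c \<in> children E r v \<Longrightarrow> length (rpath c) = Suc (length (rpath v))"
  using rpath_child by simp

lemma parent_in_rpath_child: "c \<in> children E r v \<Longrightarrow> v \<in> set (rpath c)"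
  using rpath_child self_in_rpath[of v] by fastforce

lemma rpath_Int_children: "set (rpath x) \<inter> children E r x = {}"
  using length_rpath_mono length_rpath_child by fastforce

lemma parent_notin_children: "x \<noteq> r \<Longrightarrow> parent x \<notin> children E r x"
  using length_rpath_child length_rpath_parent by fastforce

lemma adj_eq: "{y. E x y} = (if x = r then children E r x else insert (parent x) (children E r x))"
proof -
  have "E x y \<longleftrightarrow> y \<in> children E r x \<or> (x \<noteq> r \<and> y = parent x)" for y
    using adj_parent_or_child[of x y] adj_child parent_in_adj by blast
  then show ?thesis by auto
qed

lemma child_on_rpath:
  assumes "v \<in> set (rpath w)" "v \<noteq> w"
  obtains z where "z \<in> set (rpath w)" "z \<in> children E r v"
proof -
  obtain i where i: "i < length (rpath w)" "v = rpath w ! i" "rpath v = take (Suc i) (rpath w)"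
    using assms(1) by (rule ancestorE)
  have si: "Suc i < length (rpath w)"
  proof (rule ccontr)
    assume "\<not> Suc i < length (rpath w)"
    then have "rpath v = rpath w" using i by simp
    then show False using assms last_rpath by metis
  qed
  define z where "z = rpath w ! Suc i"
  have z: "rpath z = rpath v @ [z]"
    using rpath_nth[OF si] i si unfolding z_def by (simp add: take_Suc_conv_app_nth)
  then have "z \<noteq> r" using rpath_root rpath_not_Nil[of v] by (cases "rpath v") auto
  moreover have "parent z = v" unfolding pred_v_def using z last_rpath by simp
  moreover have "z \<in> set (rpath w)" using si unfolding z_def by simp
  ultimately show thesis using that unfolding children_iff by blast
qed

lemma sibling_notin_rpath:
  assumes "c \<in> children E r v" "c' \<in> children E r v" "c \<noteq> c'" shows "c \<notin> set (rpath c')"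
  using ancestor_eq_if_length_eq length_rpath_child assms by metis

lemma ray_equiv_refl: "ray_equiv s s"
  unfolding ray_equiv_def by (rule exI[of _ 0], rule exI[of _ 0]) simp

lemma ray_equiv_sym: "ray_equiv s t \<Longrightarrow> ray_equiv t s"
  unfolding ray_equiv_def by metis

lemma ray_equiv_trans: assumes "ray_equiv s t" "ray_equiv t u" shows "ray_equiv s u"
proof -
  obtain k l where st: "\<forall>n. s (n + k) = t (n + l)" using assms(1) unfolding ray_equiv_def by blast
  obtain k' l' where tu: "\<forall>n. t (n + k') = u (n + l')" using assms(2) unfolding ray_equiv_def by blast
  have "s (n + (k + k')) = u (n + (l + l'))" for n
    using st[rule_format, of "n + k'"] tu[rule_format, of "n + l"] by (simp add: ac_simps)
  then show ?thesis unfolding ray_equiv_def by blast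
qed

lemma ends_ray_equiv: assumes "\<xi> \<in> ends E" "s \<in> \<xi>" "t \<in> \<xi>" shows "ray_equiv s t"
proof -
  obtain s0 where "\<xi> = {t. is_ray E t \<and> ray_equiv s0 t}" using assms(1) unfolding ends_def by blast
  then show ?thesis using assms ray_equiv_sym ray_equiv_trans by blast
qed

lemma end_not_empty: "\<xi> \<in> ends E \<Longrightarrow> \<xi> \<noteq> {}"
  unfolding ends_def using ray_equiv_refl by blast

lemma bdT_subset_ends: "bd x \<subseteq> ends E" unfolding bdT_def by blast

lemma bdT_root: "bd r = ends E"
  unfolding bdT_def Tsub_def using root_in_rpath end_not_empty by blast

lemma bdT_antimono: "u \<in> set (rpath v) \<Longrightarrow> bd v \<subseteq> bd u"
  unfolding bdT_def Tsub_def using ancestor_trans by blast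

lemma bdT_child_subset: "c \<in> children E r v \<Longrightarrow> bd c \<subseteq> bd v"
  using bdT_antimono parent_in_rpath_child by blast

text \<open>Two rays representing the same end share a vertex, which would lie below both \<open>u\<close> and \<open>v\<close>.\<close>
lemma bdT_disjoint:
  assumes "u \<notin> set (rpath v)" "v \<notin> set (rpath u)" shows "bd u \<inter> bd v = {}"
proof (rule ccontr)
  assume "bd u \<inter> bd v \<noteq> {}"
  then obtain \<xi> s t where x: "\<xi> \<in> ends E" "s \<in> \<xi>" "t \<in> \<xi>"
      "\<forall>n. s n \<in> Tsub E r u" "\<forall>n. t n \<in> Tsub E r v"
    unfolding bdT_def by blast
  obtain k l where "\<forall>n. s (n + k) = t (n + l)" using ends_ray_equiv[OF x(1-3)] unfolding ray_equiv_def by blast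
  then have "s k = t l" by (metis add_0)
  then have "u \<in> set (rpath (s k))" "v \<in> set (rpath (s k))"
    using x(4)[rule_format, of k] x(5)[rule_format, of l] unfolding Tsub_def by auto
  then show False using ancestors_linear assms by blast
qed

lemma bdT_siblings_disjoint:
  "c \<in> children E r v \<Longrightarrow> c' \<in> children E r v \<Longrightarrow> c \<noteq> c' \<Longrightarrow> bd c \<inter> bd c' = {}"
  by (rule bdT_disjoint) (use sibling_notin_rpath in blast)+

end

locale leafless_tree = rooted_tree +
  assumes noleaf: "no_leaves E"
begin

lemma children_not_empty: "children E r v \<noteq> {}"
proof -
  obtain y z where yz: "E v y" "E v z" "y \<noteq> z" using noleaf unfolding no_leaves_def by blast
  then show ?thesis using adj_parent_or_child by blast
qed

definition some_child :: "'a \<Rightarrow> 'a" where "some_child v = (SOME c. c \<in> children E r v)"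

lemma some_child: "some_child v \<in> children E r v"
  unfolding some_child_def using children_not_empty by (simp add: some_in_eq)

text \<open>The ray \<open>v, c(v), c(c(v)), \<dots>\<close> of iterated children witnesses an end in \<open>\<partial>T\<^sub>v\<close>.\<close>
lemma bdT_not_empty: "bd v \<noteq> {}"
proof -
  define s where "s = rec_nat v (\<lambda>_ u. some_child u)"
  have s0: "s 0 = v" and sS: "\<And>n. s (Suc n) = some_child (s n)" unfolding s_def by simp_all
  have len: "length (rpath (s n)) = length (rpath v) + n" for n
    by (induction n) (simp_all add: s0 sS length_rpath_child[OF some_child])
  have ray: "is_ray E s" unfolding is_ray_def
  proof
    fix n
    have "E (s n) (s (Suc n))" using sS adj_child[OF some_child] by simp
    moreover have "s (Suc (Suc n)) \<noteq> s n" using len[of "Suc (Suc n)"] len[of n] by auto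
    ultimately show "E (s n) (s (Suc n)) \<and> s (Suc (Suc n)) \<noteq> s n" by blast
  qed
  have sub: "v \<in> set (rpath (s n))" for n
    by (induction n) (simp_all add: s0 sS self_in_rpath rpath_child[OF some_child])
  define \<xi> where "\<xi> = {t. is_ray E t \<and> ray_equiv s t}"
  have "\<xi> \<in> ends E" unfolding ends_def \<xi>_def using ray by blast
  moreover have "s \<in> \<xi>" unfolding \<xi>_def using ray ray_equiv_refl by blast
  ultimately have "\<xi> \<in> bd v" unfolding bdT_def Tsub_def using sub by blast
  then show ?thesis by blast
qed

end

section \<open>The algebra of sets of ends and distributions\<close>

context rooted_tree
begin

abbreviation alg :: "(nat \<Rightarrow> 'a) set set set" where "alg \<equiv> end_algebra E r"

lemma basic_setsI: "finite S \<Longrightarrow> S \<subseteq> children E r x \<Longrightarrow> bd x - (\<Union>y\<in>S. bd y) \<in> basic_sets E r"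
  unfolding basic_sets_def by blast

lemma basic_sets_subset_ends: "B \<in> basic_sets E r \<Longrightarrow> B \<subseteq> ends E"
  unfolding basic_sets_def using bdT_subset_ends by blast

lemma end_algebraI: "finite F \<Longrightarrow> F \<subseteq> basic_sets E r \<Longrightarrow> pairwise disjnt F \<Longrightarrow> \<Union>F \<in> alg"
  unfolding end_algebra_def by blast

lemma end_algebraE:
  assumes "A \<in> alg"
  obtains F where "A = \<Union>F" "finite F" "F \<subseteq> basic_sets E r" "pairwise disjnt F"
  using assms unfolding end_algebra_def by blast

lemma empty_in_end_algebra: "{} \<in> alg"
  using end_algebraI[of "{}"] by simp

lemma basic_in_end_algebra: "B \<in> basic_sets E r \<Longrightarrow> B \<in> alg"
  using end_algebraI[of "{B}"] by simp

lemma bdT_in_end_algebra: "bd x \<in> alg"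
  using basic_in_end_algebra basic_setsI[of "{}" x] by simp

lemma end_algebra_subset_ends: "A \<in> alg \<Longrightarrow> A \<subseteq> ends E"
  unfolding end_algebra_def using basic_sets_subset_ends by blast

lemma end_algebra_Un: assumes "A \<in> alg" "B \<in> alg" "A \<inter> B = {}" shows "A \<union> B \<in> alg"
proof -
  obtain F where F: "A = \<Union>F" "finite F" "F \<subseteq> basic_sets E r" "pairwise disjnt F"
    using assms(1) by (rule end_algebraE)
  obtain G where G: "B = \<Union>G" "finite G" "G \<subseteq> basic_sets E r" "pairwise disjnt G"
    using assms(2) by (rule end_algebraE)
  have FG: "disjnt X Y" if "X \<in> F" "Y \<in> G" for X Y
    using that assms(3) unfolding F(1) G(1) disjnt_def by blast
  have "pairwise disjnt (F \<union> G)"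
    unfolding pairwise_def
  proof (intro ballI impI)
    fix X Y assume XY: "X \<in> F \<union> G" "Y \<in> F \<union> G" "X \<noteq> Y"
    consider "X \<in> F" "Y \<in> F" | "X \<in> G" "Y \<in> G" | "X \<in> F" "Y \<in> G" | "X \<in> G" "Y \<in> F"
      using XY(1,2) by blast
    then show "disjnt X Y"
    proof cases
      case 1 then show ?thesis using F(4) XY(3) unfolding pairwise_def by blast
    next
      case 2 then show ?thesis using G(4) XY(3) unfolding pairwise_def by blast
    next
      case 3 then show ?thesis using FG by blast
    next
      case 4 then show ?thesis using FG disjnt_sym by blast
    qed
  qed
  then show ?thesis using end_algebraI[of "F \<union> G"] F G by simp
qed

lemma basic_sets_Int_nested:
  assumes S: "finite S" "S \<subseteq> children E r x" and S': "finite S'" "S' \<subseteq> children E r y"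
    and xy: "x \<in> set (rpath y)"
  defines "C \<equiv> (bd x - (\<Union>z\<in>S. bd z)) \<inter> (bd y - (\<Union>z\<in>S'. bd z))"
  shows "C \<in> basic_sets E r \<or> C = {}"
proof (cases "x = y")
  case True
  then have "C = bd x - (\<Union>z\<in>S \<union> S'. bd z)" unfolding C_def by blast
  then show ?thesis using S S' True basic_setsI[of "S \<union> S'" x] by auto
next
  case False
  obtain z where z: "z \<in> set (rpath y)" "z \<in> children E r x" using xy False by (rule child_on_rpath)
  have yz: "bd y \<subseteq> bd z" using bdT_antimono z(1) by blast
  show ?thesis
  proof (cases "z \<in> S")
    case True
    then show ?thesis using yz unfolding C_def by blast
  next
    case False
    then have "bd z \<inter> bd s = {}" if "s \<in> S" for s
      using bdT_siblings_disjoint z(2) that S(2) by blast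
    then have "C = bd y - (\<Union>z\<in>S'. bd z)"
      using yz bdT_child_subset[OF z(2)] unfolding C_def by blast
    then show ?thesis using basic_setsI[OF S'] by simp
  qed
qed

lemma basic_sets_Int:
  assumes "C \<in> basic_sets E r" "D \<in> basic_sets E r" shows "C \<inter> D \<in> basic_sets E r \<or> C \<inter> D = {}"
proof -
  obtain x S where C: "C = bd x - (\<Union>z\<in>S. bd z)" "finite S" "S \<subseteq> children E r x"
    using assms(1) unfolding basic_sets_def by blast
  obtain y S' where D: "D = bd y - (\<Union>z\<in>S'. bd z)" "finite S'" "S' \<subseteq> children E r y"
    using assms(2) unfolding basic_sets_def by blast
  consider "x \<in> set (rpath y)" | "y \<in> set (rpath x)" | "x \<notin> set (rpath y)" "y \<notin> set (rpath x)"
    by blast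
  then show ?thesis
  proof cases
    case 1
    then show ?thesis using basic_sets_Int_nested[OF C(2,3) D(2,3)] C(1) D(1) by simp
  next
    case 2
    then show ?thesis using basic_sets_Int_nested[OF D(2,3) C(2,3)] C(1) D(1) by (simp add: Int_commute)
  next
    case 3
    then have "bd x \<inter> bd y = {}" by (rule bdT_disjoint)
    then show ?thesis using C(1) D(1) by blast
  qed
qed

lemma end_algebra_Int: assumes "A \<in> alg" "B \<in> alg" shows "A \<inter> B \<in> alg"
proof -
  obtain F where F: "A = \<Union>F" "finite F" "F \<subseteq> basic_sets E r" "pairwise disjnt F"
    using assms(1) by (rule end_algebraE)
  obtain G where G: "B = \<Union>G" "finite G" "G \<subseteq> basic_sets E r" "pairwise disjnt G"
    using assms(2) by (rule end_algebraE)
  define H where "H = (\<lambda>(C, D). C \<inter> D) ` (F \<times> G) - {{}}"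
  have fin: "finite H" unfolding H_def using F(2) G(2) by simp
  have sub: "H \<subseteq> basic_sets E r"
  proof
    fix X assume "X \<in> H"
    then obtain C D where "C \<in> F" "D \<in> G" "X = C \<inter> D" "X \<noteq> {}" unfolding H_def by blast
    then show "X \<in> basic_sets E r" using basic_sets_Int F(3) G(3) by blast
  qed
  have disj: "pairwise disjnt H"
    unfolding pairwise_def
  proof (intro ballI impI)
    fix X Y assume "X \<in> H" "Y \<in> H" "X \<noteq> Y"
    then obtain C D C' D' where h: "C \<in> F" "D \<in> G" "X = C \<inter> D" "C' \<in> F" "D' \<in> G" "Y = C' \<inter> D'"
      unfolding H_def by blast
    show "disjnt X Y"
    proof (cases "C = C'")
      case True
      then have "D \<noteq> D'" using h(3,6) \<open>X \<noteq> Y\<close> by auto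
      then have "disjnt D D'" using G(4) h(2,5) unfolding pairwise_def by blast
      then show ?thesis using h(3,6) unfolding disjnt_def by blast
    next
      case False
      then have "disjnt C C'" using F(4) h(1,4) unfolding pairwise_def by blast
      then show ?thesis using h(3,6) unfolding disjnt_def by blast
    qed
  qed
  have "\<Union>H = A \<inter> B" unfolding H_def F(1) G(1) by blast
  then show ?thesis using end_algebraI[OF fin sub disj] by simp
qed

lemma distribution_empty: assumes "is_distribution E r \<nu>" shows "\<nu> {} = 0"
proof -
  have "\<nu> ({} \<union> {}) = \<nu> {} + \<nu> {}"
    using assms empty_in_end_algebra unfolding is_distribution_def by blast
  then show ?thesis by simp
qed

lemma distribution_Un:
  "is_distribution E r \<nu> \<Longrightarrow> A \<in> alg \<Longrightarrow> B \<in> alg \<Longrightarrow> A \<inter> B = {} \<Longrightarrow> \<nu> (A \<union> B) = \<nu> A + \<nu> B"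
  unfolding is_distribution_def by blast

lemma distribution_UN:
  assumes \<nu>: "is_distribution E r \<nu>" and "finite I"
    and "\<And>i. i \<in> I \<Longrightarrow> g i \<in> alg" and "\<And>i j. i \<in> I \<Longrightarrow> j \<in> I \<Longrightarrow> i \<noteq> j \<Longrightarrow> g i \<inter> g j = {}"
  shows "(\<Union>i\<in>I. g i) \<in> alg \<and> \<nu> (\<Union>i\<in>I. g i) = (\<Sum>i\<in>I. \<nu> (g i))"
  using assms(2-)
proof (induction I rule: finite_induct)
  case empty
  then show ?case using empty_in_end_algebra distribution_empty[OF \<nu>] by simp
next
  case (insert i I)
  then have IH: "(\<Union>i\<in>I. g i) \<in> alg" "\<nu> (\<Union>i\<in>I. g i) = (\<Sum>i\<in>I. \<nu> (g i))" by auto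
  have "g i \<inter> g j = {}" if "j \<in> I" for j
    using insert.prems(2)[of i j] insert.hyps(2) that by blast
  then have disj: "g i \<inter> (\<Union>i\<in>I. g i) = {}" by blast
  show ?case
    using end_algebra_Un[OF _ IH(1) disj] distribution_Un[OF \<nu> _ IH(1) disj] insert IH(2) by simp
qed

lemma adapted_partition_const:
  "adapted_partition E r \<phi> P \<Longrightarrow> A \<in> P \<Longrightarrow> \<xi> \<in> A \<Longrightarrow> \<eta> \<in> A \<Longrightarrow> \<phi> \<xi> = \<phi> \<eta>"
  unfolding adapted_partition_def by blast

lemma distribution_partition_sum:
  assumes \<nu>: "is_distribution E r \<nu>" and A: "A \<in> alg"
    and R: "finite R" "R \<subseteq> alg" "pairwise disjnt R" "\<Union>R = ends E"
  shows "\<nu> A = (\<Sum>B\<in>R. \<nu> (A \<inter> B))"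
proof -
  have "(\<Union>B\<in>R. A \<inter> B) = A" using R(4) end_algebra_subset_ends[OF A] by blast
  moreover have "\<nu> (\<Union>B\<in>R. A \<inter> B) = (\<Sum>B\<in>R. \<nu> (A \<inter> B))"
    using distribution_UN[OF \<nu> R(1), of "\<lambda>B. A \<inter> B"] end_algebra_Int[OF A] R(2,3)
    unfolding pairwise_def disjnt_def by blast
  ultimately show ?thesis by simp
qed

text \<open>The partition chosen by \<^const>\<open>dist_integral\<close> is immaterial, since any two adapted
  partitions have a common refinement.\<close>
lemma dist_integral_eq:
  assumes \<nu>: "is_distribution E r \<nu>" and Q: "adapted_partition E r \<phi> Q"
  shows "dist_integral E r \<nu> \<phi> = (\<Sum>B\<in>Q. \<phi> (SOME \<xi>. \<xi> \<in> B) * \<nu> B)"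
proof -
  define P where "P = (SOME P. adapted_partition E r \<phi> P)"
  have P: "adapted_partition E r \<phi> P" unfolding P_def using Q by (rule someI)
  define c where "c A = \<phi> (SOME \<xi>. \<xi> \<in> A)" for A
  have split: "\<nu> A = (\<Sum>B\<in>R. \<nu> (A \<inter> B))" if "adapted_partition E r \<phi> R" "A \<in> alg" for A R
    using distribution_partition_sum[OF \<nu> that(2)] that(1) unfolding adapted_partition_def by blast
  have const: "c A * \<nu> (A \<inter> B) = c B * \<nu> (A \<inter> B)" if "A \<in> P" "B \<in> Q" for A B
  proof (cases "A \<inter> B = {}")
    case True then show ?thesis using distribution_empty[OF \<nu>] by simp
  next
    case False
    then obtain \<xi> where \<xi>: "\<xi> \<in> A" "\<xi> \<in> B" by blast
    have sA: "(SOME \<xi>. \<xi> \<in> A) \<in> A" using \<xi>(1) by (rule someI)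
    have sB: "(SOME \<xi>. \<xi> \<in> B) \<in> B" using \<xi>(2) by (rule someI)
    have "c A = \<phi> \<xi>" "c B = \<phi> \<xi>"
      using adapted_partition_const[OF P \<open>A \<in> P\<close> sA \<xi>(1)] adapted_partition_const[OF Q \<open>B \<in> Q\<close> sB \<xi>(2)]
      unfolding c_def by simp_all
    then show ?thesis by simp
  qed
  have fin: "finite P" "finite Q" "P \<subseteq> alg" "Q \<subseteq> alg" using P Q unfolding adapted_partition_def by auto
  have "dist_integral E r \<nu> \<phi> = (\<Sum>A\<in>P. c A * \<nu> A)"
    unfolding dist_integral_def P_def c_def by simp
  also have "\<dots> = (\<Sum>A\<in>P. \<Sum>B\<in>Q. c A * \<nu> (A \<inter> B))"
    using split[OF Q] fin(3) by (simp add: sum_distrib_left subset_iff)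
  also have "\<dots> = (\<Sum>A\<in>P. \<Sum>B\<in>Q. c B * \<nu> (A \<inter> B))"
    using const by (intro sum.cong refl) auto
  also have "\<dots> = (\<Sum>B\<in>Q. \<Sum>A\<in>P. c B * \<nu> (B \<inter> A))"
    by (subst sum.swap) (simp add: Int_commute)
  also have "\<dots> = (\<Sum>B\<in>Q. c B * \<nu> B)"
    using split[OF P] fin(4) by (simp add: sum_distrib_left subset_iff)
  finally show ?thesis unfolding c_def .
qed

end

section \<open>The integral of the kernel\<close>

context rooted_tree
begin

lemma geod_to_ancestor:
  assumes "i < length (rpath x)" shows "geod E x (rpath x ! i) = rev (drop i (rpath x))"
proof (rule geod_unique)
  show "is_path E (rev (drop i (rpath x)))" using is_path_rev is_path_drop is_path_rpath assms by blast
  show "hd (rev (drop i (rpath x))) = x" using assms last_rpath by (simp add: hd_rev)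
  show "last (rev (drop i (rpath x))) = rpath x ! i" using assms by (simp add: last_rev hd_drop_conv_nth)
qed

lemma fext_refl: "fext E f x x = 1"
  unfolding fext_def by (simp add: geod_refl)

lemma fext_edge: "E x y \<Longrightarrow> fext E f x y = f x y"
  unfolding fext_def by (simp add: geod_edge)

lemma fext_root_child: assumes "y \<in> children E r x" shows "fext E f r y = fext E f r x * f x y"
proof -
  have "zip (rpath y) (tl (rpath y)) = zip (rpath x) (tl (rpath x)) @ [(x, y)]"
    using rpath_child[OF assms] zip_snoc_tl[OF rpath_not_Nil[of x], of y] last_rpath[of x] rpath_not_Nil[of x]
    by simp
  then show ?thesis unfolding fext_def Let_def by simp
qed

lemma fext_child_ancestor:
  assumes "y \<in> children E r x" "v \<in> set (rpath x)" shows "fext E f y v = f y x * fext E f x v"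
proof -
  have py: "rpath y = rpath x @ [y]" using rpath_child[OF assms(1)] .
  obtain i where i: "i < length (rpath x)" "v = rpath x ! i" using assms(2) by (metis in_set_conv_nth)
  then have "geod E y v = rev (drop i (rpath y))" using geod_to_ancestor[of i y] py by (simp add: nth_append)
  moreover have "geod E x v = rev (drop i (rpath x))" using geod_to_ancestor i by metis
  ultimately have "geod E y v = y # geod E x v" using py i by simp
  moreover have "geod E x v \<noteq> []" "hd (geod E x v) = x" using geod_spec geod_not_Nil by auto
  ultimately show ?thesis unfolding fext_def Let_def by (cases "geod E x v") auto
qed

lemma fext_root_nonzero:
  assumes "\<And>a b. E a b \<Longrightarrow> f a b \<noteq> 0" shows "fext E f r x \<noteq> 0"
proof (induction x rule: measure_induct_rule[of "\<lambda>x. length (rpath x)"])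
  case (less x)
  show ?case
  proof (cases "x = r")
    case True then show ?thesis by (simp add: fext_refl)
  next
    case False
    then have "x \<in> children E r (parent x)" unfolding children_iff by blast
    then show ?thesis
      using fext_root_child less length_rpath_parent[OF False] assms adj_parent[OF False] by simp
  qed
qed

definition atom :: "'a set \<Rightarrow> 'a \<Rightarrow> (nat \<Rightarrow> 'a) set set" where
  "atom V v = bd v - (\<Union>c\<in>V \<inter> children E r v. bd c)"

definition finite_subtree :: "'a set \<Rightarrow> bool" where
  "finite_subtree V \<longleftrightarrow> finite V \<and> r \<in> V \<and> (\<forall>v\<in>V. set (rpath v) \<subseteq> V)"

lemma finite_subtree_rpath: "finite_subtree (set (rpath x))"
  unfolding finite_subtree_def using root_in_rpath rpath_ancestor_subset by auto

lemma finite_subtree_Un: "finite_subtree V \<Longrightarrow> finite_subtree W \<Longrightarrow> finite_subtree (V \<union> W)"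
  unfolding finite_subtree_def by auto

lemma atom_basic: "finite V \<Longrightarrow> atom V v \<in> basic_sets E r"
  unfolding atom_def by (rule basic_setsI) auto

lemma atom_subset_bdT: "atom V v \<subseteq> bd v"
  unfolding atom_def by blast

lemma atom_rpath_self: "atom (set (rpath x)) x = bd x"
  unfolding atom_def using rpath_Int_children by simp

text \<open>Every end lies in the atom of the deepest vertex \<open>v \<in> V\<close> with \<open>\<xi> \<in> \<partial>T\<^sub>v\<close>.\<close>
lemma atom_cover: assumes V: "finite_subtree V" and \<xi>: "\<xi> \<in> ends E" shows "\<exists>v\<in>V. \<xi> \<in> atom V v"
proof -
  define W where "W = {v\<in>V. \<xi> \<in> bd v}"
  have "r \<in> W" using V \<xi> bdT_root unfolding W_def finite_subtree_def by auto
  moreover have W: "finite W" using V unfolding W_def finite_subtree_def by auto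
  ultimately obtain v where v: "v \<in> W" "Max ((\<lambda>w. length (rpath w)) ` W) = length (rpath v)"
    using obtains_MAX[of W "\<lambda>w. length (rpath w)"] by blast
  have "\<xi> \<notin> bd c" if c: "c \<in> V \<inter> children E r v" for c
  proof
    assume "\<xi> \<in> bd c"
    then have "c \<in> W" using c unfolding W_def by auto
    then have "length (rpath c) \<le> length (rpath v)"
      using Max_ge[OF finite_imageI[OF W] imageI[of c W "\<lambda>w. length (rpath w)"]] v(2) by simp
    then show False using length_rpath_child[of c v] c by auto
  qed
  then have "\<xi> \<in> atom V v" using v unfolding atom_def W_def by auto
  then show ?thesis using v unfolding W_def by auto
qed

lemma atom_disjoint:
  assumes V: "finite_subtree V" and "v \<in> V" "w \<in> V" "v \<noteq> w"
  shows "atom V v \<inter> atom V w = {}"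
proof -
  have nested: "atom V v \<inter> atom V w = {}"
    if vw: "w \<in> V" "v \<in> set (rpath w)" "v \<noteq> w" for v w
  proof -
    obtain z where z: "z \<in> set (rpath w)" "z \<in> children E r v" using vw(2,3) by (rule child_on_rpath)
    have "z \<in> V" using V vw(1) z(1) unfolding finite_subtree_def by blast
    then have "atom V v \<inter> bd z = {}" using z(2) unfolding atom_def by blast
    moreover have "atom V w \<subseteq> bd z" using atom_subset_bdT bdT_antimono z(1) by blast
    ultimately show ?thesis by blast
  qed
  consider "v \<in> set (rpath w)" | "w \<in> set (rpath v)" | "v \<notin> set (rpath w)" "w \<notin> set (rpath v)"
    by blast
  then show ?thesis
  proof cases
    case 1 then show ?thesis using nested assms by blast
  next
    case 2 then show ?thesis using nested[of v w] assms by blast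
  next
    case 3 then show ?thesis using bdT_disjoint atom_subset_bdT by blast
  qed
qed

lemma distribution_bdT_split:
  assumes \<nu>: "is_distribution E r \<nu>" and "finite V"
  shows "\<nu> (bd v) = \<nu> (atom V v) + (\<Sum>c\<in>V \<inter> children E r v. \<nu> (bd c))"
proof -
  let ?C = "V \<inter> children E r v"
  have U: "(\<Union>c\<in>?C. bd c) \<in> alg \<and> \<nu> (\<Union>c\<in>?C. bd c) = (\<Sum>c\<in>?C. \<nu> (bd c))"
    using assms(2) bdT_siblings_disjoint bdT_in_end_algebra by (intro distribution_UN[OF \<nu>]) auto
  have "bd v = atom V v \<union> (\<Union>c\<in>?C. bd c)" unfolding atom_def using bdT_child_subset by blast
  moreover have "atom V v \<inter> (\<Union>c\<in>?C. bd c) = {}" unfolding atom_def by blast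
  ultimately show ?thesis
    using distribution_Un[OF \<nu> basic_in_end_algebra[OF atom_basic[OF assms(2)]]] U by simp
qed

lemma confl_end_atom:
  assumes v: "v \<in> set (rpath x)" and \<xi>: "\<xi> \<in> atom (set (rpath x)) v"
  shows "confl_end E r x \<xi> = v"
proof -
  obtain i where i: "i < length (rpath x)" "v = rpath x ! i" "rpath v = take (Suc i) (rpath x)"
    using v by (rule ancestorE)
  have before: "\<xi> \<in> bd u" if "u \<in> set (take (Suc i) (rpath x))" for u
  proof -
    have "u \<in> set (rpath v)" using that i(3) by simp
    then show ?thesis using bdT_antimono atom_subset_bdT \<xi> by blast
  qed
  have after: "takeWhile (\<lambda>u. \<xi> \<in> bd u) (drop (Suc i) (rpath x)) = []"
  proof (cases "Suc i < length (rpath x)")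
    case True
    define z where "z = rpath x ! Suc i"
    have "rpath z = rpath v @ [z]"
      using rpath_nth[OF True] i True unfolding z_def by (simp add: take_Suc_conv_app_nth)
    then have "z \<in> children E r v"
      unfolding children_iff pred_v_def using rpath_root rpath_not_Nil[of v] last_rpath[of v]
      by (cases "rpath v") auto
    moreover have "z \<in> set (rpath x)" using True unfolding z_def by simp
    ultimately have "\<xi> \<notin> bd z" using \<xi> unfolding atom_def by blast
    moreover have "drop (Suc i) (rpath x) = z # drop (Suc (Suc i)) (rpath x)"
      using True unfolding z_def by (simp add: Cons_nth_drop_Suc)
    ultimately show ?thesis by simp
  qed simp
  have "takeWhile (\<lambda>u. \<xi> \<in> bd u) (rpath x) = take (Suc i) (rpath x)"
    using takeWhile_append2[of "take (Suc i) (rpath x)" "\<lambda>u. \<xi> \<in> bd u" "drop (Suc i) (rpath x)"]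
      before after by simp
  then show ?thesis unfolding confl_end_def using i by (simp add: take_Suc_conv_app_nth)
qed

definition kernel_at :: "('a \<Rightarrow> 'a \<Rightarrow> complex) \<Rightarrow> 'a \<Rightarrow> 'a \<Rightarrow> complex" where
  "kernel_at f x v = fext E f x v / fext E f r v"

text \<open>\<open>\<integral> k(x,\<xi>) d\<nu>(\<xi>)\<close> in terms of \<open>\<mu> v = \<nu>(\<partial>T\<^sub>v)\<close>: the atom of \<open>v\<close> in the root path of
  \<open>x\<close> is \<open>\<partial>T\<^sub>v\<close> minus \<open>\<partial>T\<close> of the next vertex of the path.\<close>
definition kernel_transform :: "('a \<Rightarrow> 'a \<Rightarrow> complex) \<Rightarrow> ('a \<Rightarrow> complex) \<Rightarrow> 'a \<Rightarrow> complex" where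
  "kernel_transform f \<mu> x =
     (\<Sum>v\<in>set (rpath x). kernel_at f x v * (\<mu> v - (\<Sum>c\<in>set (rpath x) \<inter> children E r v. \<mu> c)))"

lemma dist_integral_kernel_atoms:
  assumes \<nu>: "is_distribution E r \<nu>"
  shows "dist_integral E r \<nu> (kernel E r f x) = (\<Sum>v\<in>set (rpath x). kernel_at f x v * \<nu> (atom (set (rpath x)) v))"
proof -
  let ?V = "set (rpath x)"
  let ?Q = "atom ?V ` ?V"
  let ?k = "kernel E r f x"
  have V: "finite_subtree ?V" by (rule finite_subtree_rpath)
  have k: "?k \<xi> = kernel_at f x v" if "v \<in> ?V" "\<xi> \<in> atom ?V v" for v \<xi>
    unfolding kernel_def kernel_at_def using confl_end_atom[OF that] by simp
  have ap: "adapted_partition E r ?k ?Q"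
    unfolding adapted_partition_def
  proof (intro conjI)
    show "finite ?Q" by simp
    show "?Q \<subseteq> alg" using atom_basic basic_in_end_algebra by blast
    show "pairwise disjnt ?Q" unfolding pairwise_def disjnt_def using atom_disjoint[OF V] by fastforce
    show "\<Union>?Q = ends E" using atom_cover[OF V] atom_subset_bdT bdT_subset_ends by blast
    show "\<forall>A\<in>?Q. \<forall>\<xi>\<in>A. \<forall>\<eta>\<in>A. ?k \<xi> = ?k \<eta>" using k by auto
  qed
  have summand: "?k (SOME \<xi>. \<xi> \<in> atom ?V v) * \<nu> (atom ?V v) = kernel_at f x v * \<nu> (atom ?V v)"
    if "v \<in> ?V" for v
  proof (cases "atom ?V v = {}")
    case True then show ?thesis using distribution_empty[OF \<nu>] by simp
  next
    case False
    then have "(SOME \<xi>. \<xi> \<in> atom ?V v) \<in> atom ?V v" by (simp add: some_in_eq)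
    then show ?thesis using k that by simp
  qed
  have "dist_integral E r \<nu> ?k = (\<Sum>B\<in>?Q. ?k (SOME \<xi>. \<xi> \<in> B) * \<nu> B)"
    using dist_integral_eq[OF \<nu> ap] .
  also have "\<dots> = (\<Sum>v\<in>?V. ?k (SOME \<xi>. \<xi> \<in> atom ?V v) * \<nu> (atom ?V v))"
  proof (subst sum.reindex_nontrivial)
    fix v w assume "v \<in> ?V" "w \<in> ?V" "v \<noteq> w" "atom ?V v = atom ?V w"
    then have "atom ?V v = {}" using atom_disjoint[OF V] by blast
    then show "?k (SOME \<xi>. \<xi> \<in> atom ?V v) * \<nu> (atom ?V v) = 0" using distribution_empty[OF \<nu>] by simp
  qed simp_all
  also have "\<dots> = (\<Sum>v\<in>?V. kernel_at f x v * \<nu> (atom ?V v))"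
    using summand by (rule sum.cong[OF refl])
  finally show ?thesis .
qed

lemma dist_integral_kernel:
  assumes \<nu>: "is_distribution E r \<nu>"
  shows "dist_integral E r \<nu> (kernel E r f x) = kernel_transform f (\<lambda>v. \<nu> (bd v)) x"
proof -
  have "\<nu> (atom (set (rpath x)) v) = \<nu> (bd v) - (\<Sum>c\<in>set (rpath x) \<inter> children E r v. \<nu> (bd c))" for v
    using distribution_bdT_split[OF \<nu>, of "set (rpath x)" v, OF List.finite_set] by (metis add_diff_cancel_right')
  then show ?thesis unfolding dist_integral_kernel_atoms[OF \<nu>] kernel_transform_def by simp
qed

lemma kernel_transform_root: "kernel_transform f \<mu> r = \<mu> r"
  unfolding kernel_transform_def kernel_at_def
  using rpath_Int_children[of r] by (simp add: rpath_root fext_refl)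

text \<open>The recursion that determines \<open>\<mu>\<close> from \<open>h = kernel_transform f \<mu>\<close>.\<close>
lemma kernel_transform_child:
  assumes y: "y \<in> children E r x"
  shows "kernel_transform f \<mu> y =
           f y x * kernel_transform f \<mu> x + \<mu> y * (1 / fext E f r y - f y x / fext E f r x)"
proof -
  let ?Vx = "set (rpath x)" and ?Vy = "set (rpath y)"
  have yx: "y \<noteq> r" "parent y = x" using y unfolding children_iff by auto
  have Vy: "?Vy = insert y ?Vx" "y \<notin> ?Vx"
    using rpath_child[OF y] distinct_rpath[of y] by auto
  have "?Vy \<inter> children E r v = (if v = x then insert y (?Vx \<inter> children E r v) else ?Vx \<inter> children E r v)" for v
    using Vy yx unfolding children_def by auto
  then have S: "(\<Sum>c\<in>?Vy \<inter> children E r v. \<mu> c) = (\<Sum>c\<in>?Vx \<inter> children E r v. \<mu> c) + (if v = x then \<mu> y else 0)" for v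
    using Vy(2) by (simp add: add.commute)
  have k: "kernel_at f y v = f y x * kernel_at f x v" if "v \<in> ?Vx" for v
    unfolding kernel_at_def using fext_child_ancestor[OF y that] by simp
  have "kernel_transform f \<mu> y =
      kernel_at f y y * \<mu> y + (\<Sum>v\<in>?Vx. kernel_at f y v * (\<mu> v - (\<Sum>c\<in>?Vy \<inter> children E r v. \<mu> c)))"
    unfolding kernel_transform_def using Vy rpath_Int_children[of y] by simp
  also have "(\<Sum>v\<in>?Vx. kernel_at f y v * (\<mu> v - (\<Sum>c\<in>?Vy \<inter> children E r v. \<mu> c)))
      = (\<Sum>v\<in>?Vx. f y x * (kernel_at f x v * (\<mu> v - (\<Sum>c\<in>?Vx \<inter> children E r v. \<mu> c)))
           - (if v = x then f y x * kernel_at f x x * \<mu> y else 0))"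
    using k S by (intro sum.cong refl) (auto simp: algebra_simps)
  also have "\<dots> = f y x * kernel_transform f \<mu> x - f y x * kernel_at f x x * \<mu> y"
    unfolding kernel_transform_def using self_in_rpath[of x] by (simp add: sum_subtractf sum_distrib_left)
  finally show ?thesis unfolding kernel_at_def by (simp add: fext_refl field_simps)
qed

end

section \<open>The distribution of a flow\<close>

context rooted_tree
begin

lemma bdT_child_subset_atom:
  assumes "c \<in> children E r v" "c \<notin> V" shows "bd c \<subseteq> atom V v"
proof -
  have "bd c \<inter> bd c' = {}" if "c' \<in> V \<inter> children E r v" for c'
    using bdT_siblings_disjoint that assms by blast
  then show ?thesis unfolding atom_def using bdT_child_subset[OF assms(1)] by blast
qed

lemma finite_subtree_Int_children_leaf:
  "finite_subtree V \<Longrightarrow> w \<notin> V \<Longrightarrow> V \<inter> children E r w = {}"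
  unfolding finite_subtree_def using parent_in_rpath_child by blast

lemma finite_subtree_insert_leaf:
  assumes "finite_subtree V" "w \<noteq> r" "parent w \<in> V" shows "finite_subtree (insert w V)"
  using assms rpath_parent[OF assms(2)] unfolding finite_subtree_def by auto

lemma Int_children_insert_leaf:
  assumes "w \<noteq> r"
  shows "insert w V \<inter> children E r v =
           (if v = parent w then insert w (V \<inter> children E r v) else V \<inter> children E r v)"
  using assms unfolding children_def by auto

lemma atom_insert_leaf:
  assumes "w \<noteq> r"
  shows "atom (insert w V) v = (if v = parent w then atom V v - bd w else atom V v)"
  unfolding atom_def Int_children_insert_leaf[OF assms] by auto

lemma atom_leaf: "finite_subtree V \<Longrightarrow> w \<notin> V \<Longrightarrow> atom V w = bd w"
  unfolding atom_def using finite_subtree_Int_children_leaf by simp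

definition resolves :: "'a set \<Rightarrow> (nat \<Rightarrow> 'a) set set \<Rightarrow> bool" where
  "resolves V A \<longleftrightarrow> A \<subseteq> ends E \<and> (\<forall>v\<in>V. atom V v \<subseteq> A \<or> atom V v \<inter> A = {})"

lemma resolves_insert_leaf:
  assumes V: "finite_subtree V" and w: "w \<notin> V" "w \<noteq> r" "parent w \<in> V" and A: "resolves V A"
  shows "resolves (insert w V) A"
  unfolding resolves_def
proof (intro conjI ballI)
  show "A \<subseteq> ends E" using A unfolding resolves_def by blast
  fix u assume u: "u \<in> insert w V"
  show "atom (insert w V) u \<subseteq> A \<or> atom (insert w V) u \<inter> A = {}"
  proof (cases "u = w")
    case True
    have "w \<in> children E r (parent w)" using w(2) unfolding children_iff by blast
    then have "atom (insert w V) w \<subseteq> atom V (parent w)"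
      using atom_insert_leaf[OF w(2)] atom_leaf[OF V w(1)] parent_neq[OF w(2)]
        bdT_child_subset_atom[OF _ w(1)] by simp
    then show ?thesis using True w(3) A unfolding resolves_def by blast
  next
    case False
    then show ?thesis using u A unfolding resolves_def atom_insert_leaf[OF w(2)] by auto
  qed
qed

lemma resolves_Union:
  assumes "\<And>C. C \<in> F \<Longrightarrow> resolves V C" shows "resolves V (\<Union>F)"
  unfolding resolves_def
proof (intro conjI ballI)
  show "\<Union>F \<subseteq> ends E" using assms unfolding resolves_def by blast
  fix v assume v: "v \<in> V"
  show "atom V v \<subseteq> \<Union>F \<or> atom V v \<inter> \<Union>F = {}"
  proof (cases "atom V v \<inter> \<Union>F = {}")
    case False
    then obtain C where C: "C \<in> F" "atom V v \<inter> C \<noteq> {}" by blast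
    then have "atom V v \<subseteq> C" using assms[OF C(1)] v unfolding resolves_def by blast
    then show ?thesis using C(1) by blast
  qed simp
qed

lemma resolves_basic:
  assumes V: "finite_subtree V" and x: "x \<in> V" and S: "S \<subseteq> V" "S \<subseteq> children E r x"
  shows "resolves V (bd x - (\<Union>s\<in>S. bd s))"
  unfolding resolves_def
proof (intro conjI ballI)
  let ?C = "bd x - (\<Union>s\<in>S. bd s)"
  show "?C \<subseteq> ends E" using bdT_subset_ends by blast
  fix v assume v: "v \<in> V"
  consider "v = x" | "x \<in> set (rpath v)" "x \<noteq> v" | "v \<in> set (rpath x)" "v \<noteq> x"
    | "x \<notin> set (rpath v)" "v \<notin> set (rpath x)"
    by blast
  then show "atom V v \<subseteq> ?C \<or> atom V v \<inter> ?C = {}"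
  proof cases
    case 1
    then show ?thesis unfolding atom_def using S by blast
  next
    case 2
    obtain z where z: "z \<in> set (rpath v)" "z \<in> children E r x" using 2 by (rule child_on_rpath)
    have vz: "atom V v \<subseteq> bd z" using atom_subset_bdT bdT_antimono[OF z(1)] by blast
    show ?thesis
    proof (cases "z \<in> S")
      case True
      then show ?thesis using vz by blast
    next
      case False
      then have "bd z \<inter> bd s = {}" if "s \<in> S" for s
        using bdT_siblings_disjoint[OF z(2)] that S(2) by blast
      then show ?thesis using vz bdT_child_subset[OF z(2)] by blast
    qed
  next
    case 3
    obtain z where z: "z \<in> set (rpath x)" "z \<in> children E r v" using 3 by (rule child_on_rpath)
    have "z \<in> V" using V x z(1) unfolding finite_subtree_def by blast
    then have "atom V v \<inter> bd z = {}" using z(2) unfolding atom_def by blast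
    moreover have "bd x \<subseteq> bd z" using bdT_antimono z(1) by blast
    ultimately show ?thesis by blast
  next
    case 4
    then show ?thesis using bdT_disjoint[OF 4(2,1)] atom_subset_bdT by blast
  qed
qed

lemma finite_subtree_rpaths: "finite W \<Longrightarrow> finite_subtree (insert r (\<Union>w\<in>W. set (rpath w)))"
  unfolding finite_subtree_def
proof (intro conjI ballI)
  fix v assume "v \<in> insert r (\<Union>w\<in>W. set (rpath w))"
  then show "set (rpath v) \<subseteq> insert r (\<Union>w\<in>W. set (rpath w))"
    using rpath_ancestor_subset rpath_root by fastforce
qed auto

lemma resolving_subtree_exists:
  assumes "A \<in> alg" obtains V where "finite_subtree V" "resolves V A"
proof -
  obtain F where F: "A = \<Union>F" "finite F" "F \<subseteq> basic_sets E r"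
    using assms by (rule end_algebraE)
  have "\<forall>C\<in>F. \<exists>x S. C = bd x - (\<Union>s\<in>S. bd s) \<and> finite S \<and> S \<subseteq> children E r x"
    using F(3) unfolding basic_sets_def by blast
  then obtain X S where XS: "\<And>C. C \<in> F \<Longrightarrow>
      C = bd (X C) - (\<Union>s\<in>S C. bd s) \<and> finite (S C) \<and> S C \<subseteq> children E r (X C)"
    by metis
  define V where "V = insert r (\<Union>w\<in>(\<Union>C\<in>F. insert (X C) (S C)). set (rpath w))"
  have V: "finite_subtree V" unfolding V_def using F(2) XS by (intro finite_subtree_rpaths) auto
  have "resolves V C" if C: "C \<in> F" for C
  proof -
    have XV: "X C \<in> V" "S C \<subseteq> V" unfolding V_def using C self_in_rpath by blast+
    have "C = bd (X C) - (\<Union>s\<in>S C. bd s)" "S C \<subseteq> children E r (X C)" using XS[OF C] by auto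
    then show ?thesis using resolves_basic[OF V XV] by simp
  qed
  then have "resolves V A" unfolding F(1) by (rule resolves_Union)
  then show thesis using V that by blast
qed

end

locale end_flow = leafless_tree +
  fixes m :: "'a \<Rightarrow> complex"
  assumes flow: "\<And>x. (m has_sum m x) (children E r x)"
begin

definition atom_mass :: "'a set \<Rightarrow> 'a \<Rightarrow> complex" where
  "atom_mass V v = m v - (\<Sum>c\<in>V \<inter> children E r v. m c)"

definition mass_on :: "'a set \<Rightarrow> (nat \<Rightarrow> 'a) set set \<Rightarrow> complex" where
  "mass_on V A = (\<Sum>v\<in>V. if atom V v \<subseteq> A then atom_mass V v else 0)"

text \<open>By \<open>mass_on_refine\<close>, any finite subtree whose atoms resolve \<open>A\<close> gives the same mass,
  so the choice below is immaterial.\<close>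
definition flow_dist :: "(nat \<Rightarrow> 'a) set set \<Rightarrow> complex" where
  "flow_dist A = mass_on (SOME V. finite_subtree V \<and> resolves V A) A"

lemma atom_mass_insert_leaf:
  assumes V: "finite_subtree V" and w: "w \<notin> V" "w \<noteq> r"
  shows "atom_mass (insert w V) v = (if v = parent w then atom_mass V v - m w else atom_mass V v)"
proof -
  have "finite (V \<inter> children E r u)" for u using V unfolding finite_subtree_def by blast
  then show ?thesis unfolding atom_mass_def Int_children_insert_leaf[OF w(2)] using w(1) by simp
qed

lemma atom_mass_leaf: "finite_subtree V \<Longrightarrow> w \<notin> V \<Longrightarrow> atom_mass V w = m w"
  unfolding atom_mass_def using finite_subtree_Int_children_leaf by simp

text \<open>An empty atom has no mass: all children of \<open>v\<close> then lie in \<open>V\<close>, since \<open>\<partial>T\<^sub>c \<noteq> {}\<close>,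
  and the flow condition at \<open>v\<close> is a finite sum.\<close>
lemma atom_mass_empty:
  assumes V: "finite_subtree V" and empty: "atom V v = {}" shows "atom_mass V v = 0"
proof -
  have sub: "children E r v \<subseteq> V"
  proof
    fix c assume c: "c \<in> children E r v"
    show "c \<in> V"
    proof (rule ccontr)
      assume "c \<notin> V"
      then have "bd c \<subseteq> atom V v" by (rule bdT_child_subset_atom[OF c])
      then show False using empty bdT_not_empty[of c] by blast
    qed
  qed
  then have fin: "finite (children E r v)" using V finite_subset unfolding finite_subtree_def by blast
  have "m v = (\<Sum>c\<in>children E r v. m c)"
    using has_sum_unique[OF flow[of v] has_sum_finite[OF fin]] .
  then show ?thesis unfolding atom_mass_def using sub by (simp add: Int_absorb1)
qed

text \<open>Adding a leaf \<open>w\<close> splits the atom of its parent into \<open>\<partial>T\<^sub>w\<close>, of mass \<open>m w\<close>,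
  and the rest, whose mass drops by \<open>m w\<close>.\<close>
lemma mass_on_insert_leaf:
  assumes V: "finite_subtree V" and w: "w \<notin> V" "w \<noteq> r" "parent w \<in> V" and A: "resolves V A"
  shows "mass_on (insert w V) A = mass_on V A"
proof -
  let ?p = "parent w" and ?V' = "insert w V"
  define T where "T V' u = (if atom V' u \<subseteq> A then atom_mass V' u else 0)" for V' u
  have fin: "finite V" using V unfolding finite_subtree_def by blast
  have pw: "?p \<noteq> w" using parent_neq[OF w(2)] .
  have wp: "w \<in> children E r ?p" using w(2) unfolding children_iff by blast
  have atom_w: "atom ?V' w = bd w" "atom_mass ?V' w = m w"
    using atom_insert_leaf[OF w(2)] atom_mass_insert_leaf[OF V w(1,2)] atom_leaf[OF V w(1)]
      atom_mass_leaf[OF V w(1)] pw by auto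
  have atom_p: "atom ?V' ?p = atom V ?p - bd w" "atom_mass ?V' ?p = atom_mass V ?p - m w"
    using atom_insert_leaf[OF w(2)] atom_mass_insert_leaf[OF V w(1,2)] by auto
  have sub: "bd w \<subseteq> atom V ?p" using bdT_child_subset_atom[OF wp w(1)] .
  have Ap: "atom V ?p \<subseteq> A \<or> atom V ?p \<inter> A = {}" using A w(3) unfolding resolves_def by blast
  have "T ?V' w + T ?V' ?p = T V ?p"
  proof (cases "atom V ?p \<subseteq> A")
    case True
    then show ?thesis unfolding T_def using atom_w atom_p sub by auto
  next
    case False
    then have disj: "atom V ?p \<inter> A = {}" using Ap by blast
    then have "\<not> bd w \<subseteq> A" using sub bdT_not_empty[of w] by blast
    moreover have "atom_mass ?V' ?p = 0" if "atom ?V' ?p \<subseteq> A"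
      using that disj atom_p(1) atom_mass_empty[OF finite_subtree_insert_leaf[OF V w(2,3)]] by blast
    ultimately show ?thesis unfolding T_def using atom_w False by simp
  qed
  moreover have "T ?V' u = T V u" if "u \<in> V - {?p}" for u
    using that unfolding T_def atom_insert_leaf[OF w(2)] atom_mass_insert_leaf[OF V w(1,2)] by simp
  ultimately have "(\<Sum>u\<in>?V'. T ?V' u) = (\<Sum>u\<in>V. T V u)"
    using fin w(1,3) pw by (simp add: sum.remove[of V ?p])
  then show ?thesis unfolding mass_on_def T_def .
qed

lemma mass_on_refine:
  assumes "finite_subtree V" "finite_subtree V'" "V \<subseteq> V'" "resolves V A"
  shows "resolves V' A \<and> mass_on V' A = mass_on V A"
  using assms
proof (induction "card (V' - V)" arbitrary: V)
  case 0
  then have "V' = V" unfolding finite_subtree_def by auto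
  then show ?case using 0 by simp
next
  case (Suc n)
  note V = Suc.prems(1) and V' = Suc.prems(2)
  have fin: "finite (V' - V)" using V' unfolding finite_subtree_def by auto
  have "V' - V \<noteq> {}" using Suc.hyps(2) by (metis card.empty nat.distinct(1))
  then obtain w where w: "w \<in> V' - V" "Min ((\<lambda>u. length (rpath u)) ` (V' - V)) = length (rpath w)"
    using obtains_MIN[OF fin] by metis
  have wr: "w \<noteq> r" using w(1) V unfolding finite_subtree_def by auto
  have "parent w \<in> V'" using V' w(1) parent_in_rpath[OF wr] unfolding finite_subtree_def by blast
  moreover have "parent w \<notin> V' - V"
  proof
    assume "parent w \<in> V' - V"
    then have "length (rpath w) \<le> length (rpath (parent w))"
      using Min_le[OF finite_imageI[OF fin]] w(2) by (metis imageI)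
    then show False using length_rpath_parent[OF wr] by simp
  qed
  ultimately have pw: "parent w \<in> V" by blast
  have wV: "w \<notin> V" using w(1) by blast
  have V1: "finite_subtree (insert w V)" using finite_subtree_insert_leaf[OF V wr pw] .
  have A1: "resolves (insert w V) A" using resolves_insert_leaf[OF V wV wr pw Suc.prems(4)] .
  have "V' - insert w V = (V' - V) - {w}" by blast
  then have "n = card (V' - insert w V)" using Suc.hyps(2) w(1) fin by simp
  moreover have "insert w V \<subseteq> V'" using Suc.prems(3) w(1) by blast
  ultimately have "resolves V' A \<and> mass_on V' A = mass_on (insert w V) A"
    using Suc.hyps(1) V1 V' A1 by blast
  then show ?case using mass_on_insert_leaf[OF V wV wr pw Suc.prems(4)] by simp
qed

end

context end_flow
begin

lemma flow_dist_eq_mass_on: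
  assumes V: "finite_subtree V" and A: "resolves V A" shows "flow_dist A = mass_on V A"
proof -
  define V0 where "V0 = (SOME V. finite_subtree V \<and> resolves V A)"
  have "finite_subtree V0 \<and> resolves V0 A" unfolding V0_def using V A by (rule someI[of _ V, OF conjI])
  then have V0: "finite_subtree V0" "resolves V0 A" by auto
  have U: "finite_subtree (V0 \<union> V)" using finite_subtree_Un[OF V0(1) V] .
  have "mass_on (V0 \<union> V) A = mass_on V0 A" using mass_on_refine[OF V0(1) U _ V0(2)] by blast
  moreover have "mass_on (V0 \<union> V) A = mass_on V A" using mass_on_refine[OF V U _ A] by blast
  ultimately show ?thesis unfolding flow_dist_def V0_def[symmetric] by simp
qed

lemma mass_on_Un:
  assumes V: "finite_subtree V" and A: "resolves V A" and B: "resolves V B" and disj: "A \<inter> B = {}"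
  shows "mass_on V (A \<union> B) = mass_on V A + mass_on V B"
  unfolding mass_on_def sum.distrib[symmetric]
proof (rule sum.cong[OF refl])
  fix v assume v: "v \<in> V"
  show "(if atom V v \<subseteq> A \<union> B then atom_mass V v else 0) =
        (if atom V v \<subseteq> A then atom_mass V v else 0) + (if atom V v \<subseteq> B then atom_mass V v else 0)"
  proof (cases "atom V v = {}")
    case True
    then show ?thesis using atom_mass_empty[OF V] by simp
  next
    case False
    have "atom V v \<subseteq> A \<or> atom V v \<inter> A = {}" "atom V v \<subseteq> B \<or> atom V v \<inter> B = {}"
      using A B v unfolding resolves_def by blast+
    then consider "atom V v \<subseteq> A \<union> B" "atom V v \<subseteq> A" "\<not> atom V v \<subseteq> B"
      | "atom V v \<subseteq> A \<union> B" "\<not> atom V v \<subseteq> A" "atom V v \<subseteq> B"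
      | "\<not> atom V v \<subseteq> A \<union> B" "\<not> atom V v \<subseteq> A" "\<not> atom V v \<subseteq> B"
      using False disj by blast
    then show ?thesis by cases simp_all
  qed
qed

lemma is_distribution_flow_dist: "is_distribution E r flow_dist"
  unfolding is_distribution_def
proof (intro ballI impI)
  fix A B assume A: "A \<in> alg" and B: "B \<in> alg" and disj: "A \<inter> B = {}"
  obtain VA where VA: "finite_subtree VA" "resolves VA A" using A by (rule resolving_subtree_exists)
  obtain VB where VB: "finite_subtree VB" "resolves VB B" using B by (rule resolving_subtree_exists)
  have V: "finite_subtree (VA \<union> VB)" using finite_subtree_Un VA VB by blast
  have rA: "resolves (VA \<union> VB) A" using mass_on_refine[OF VA(1) V _ VA(2)] by blast
  have rB: "resolves (VA \<union> VB) B" using mass_on_refine[OF VB(1) V _ VB(2)] by blast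
  have rAB: "resolves (VA \<union> VB) (A \<union> B)" using resolves_Union[of "{A, B}"] rA rB by auto
  show "flow_dist (A \<union> B) = flow_dist A + flow_dist B"
    using flow_dist_eq_mass_on[OF V] rA rB rAB mass_on_Un[OF V rA rB disj] by simp
qed

lemma flow_dist_bdT: "flow_dist (bd x) = m x"
proof -
  let ?V = "set (rpath x)"
  define T where "T v = (if atom ?V v \<subseteq> bd x then atom_mass ?V v else 0)" for v
  have V: "finite_subtree ?V" by (rule finite_subtree_rpath)
  have "resolves ?V (bd x)" using resolves_basic[OF V self_in_rpath, of "{}"] by simp
  then have "flow_dist (bd x) = sum T ?V"
    using flow_dist_eq_mass_on[OF V] unfolding mass_on_def T_def by simp
  also have "\<dots> = T x + sum T (?V - {x})" using self_in_rpath[of x] by (simp add: sum.remove)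
  finally have "flow_dist (bd x) = T x + sum T (?V - {x})" .
  moreover have "T x = m x"
    unfolding T_def atom_mass_def atom_rpath_self using rpath_Int_children[of x] by simp
  moreover have "T v = 0" if v: "v \<in> ?V - {x}" for v
  proof (cases "atom ?V v \<subseteq> bd x")
    case True
    obtain z where z: "z \<in> ?V" "z \<in> children E r v" using v by (auto elim: child_on_rpath)
    have "atom ?V v \<inter> bd z = {}" using z unfolding atom_def by blast
    then have "atom ?V v = {}" using True bdT_antimono[OF z(1)] by blast
    then show ?thesis unfolding T_def using atom_mass_empty[OF V] by simp
  qed (simp add: T_def)
  ultimately show ?thesis by simp
qed

lemma strong_distribution_flow_dist:
  assumes "\<And>x. (\<lambda>y. norm (m y)) summable_on children E r x"
  shows "strong_distribution E r flow_dist"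
  unfolding strong_distribution_def using is_distribution_flow_dist flow_dist_bdT flow assms by simp

end

section \<open>Eigenfunctions and flows\<close>

context rooted_tree
begin

lemma has_sum_adj_iff:
  fixes g :: "'a \<Rightarrow> 'b::topological_ab_group_add"
  shows "(g has_sum S) {y. E x y} \<longleftrightarrow>
           (g has_sum (if x = r then S else S - g (parent x))) (children E r x)"
proof (cases "x = r")
  case True
  then show ?thesis using adj_eq[of x] by simp
next
  case False
  let ?p = "parent x" and ?C = "children E r x"
  have N: "{y. E x y} = insert ?p ?C" using adj_eq[of x] False by simp
  have p: "?p \<notin> ?C" using parent_notin_children[OF False] .
  show ?thesis
  proof
    assume "(g has_sum S) {y. E x y}"
    moreover have "(g has_sum g ?p) {?p}" using has_sum_finite[of "{?p}" g] by simp
    ultimately have "(g has_sum S - g ?p) (insert ?p ?C - {?p})"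
      unfolding N by (rule has_sum_Diff) simp
    then show "(g has_sum (if x = r then S else S - g ?p)) ?C" using p False by (simp add: insert_Diff_if)
  next
    assume "(g has_sum (if x = r then S else S - g ?p)) ?C"
    then have "(g has_sum S - g ?p) ?C" using False by simp
    then have "(g has_sum g ?p + (S - g ?p)) (insert ?p ?C)" by (rule has_sum_insert[OF p])
    then show "(g has_sum S) {y. E x y}" unfolding N by simp
  qed
qed

lemma summable_on_adj_iff:
  fixes g :: "'a \<Rightarrow> 'b::{uniform_topological_group_add, topological_comm_monoid_add, ab_group_add,
                          complete_uniform_space}"
  shows "g summable_on {y. E x y} \<longleftrightarrow> g summable_on children E r x"
  using adj_eq[of x] by (simp add: summable_on_insert_iff)

end

locale lambda_weights = rooted_tree +
  fixes p :: "'a \<Rightarrow> 'a \<Rightarrow> real" and f :: "'a \<Rightarrow> 'a \<Rightarrow> complex" and lam :: complex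
  assumes p_pos: "\<forall>x y. p x y > 0 \<longleftrightarrow> E x y"
    and f_i: "\<forall>x y. E x y \<longrightarrow> f x y * f y x \<noteq> 1"
    and f_ii: "\<forall>x. ((\<lambda>v. norm (complex_of_real (p x v) * f v x)) summable_on {v. E x v})
                  \<and> uval E p f x \<noteq> lam"
    and f_iii: "\<forall>x y. E x y \<longrightarrow>
         lam * f x y = complex_of_real (p x y)
                       + (uval E p f x - complex_of_real (p x y) * f y x) * f x y"
begin

abbreviation pc :: "'a \<Rightarrow> 'a \<Rightarrow> complex" where "pc x y \<equiv> complex_of_real (p x y)"
abbreviation u :: "'a \<Rightarrow> complex" where "u x \<equiv> uval E p f x"

lemma weight_eq: "E x y \<Longrightarrow> lam * f x y = pc x y + (u x - pc x y * f y x) * f x y"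
  using f_iii by blast

lemma f_nonzero: assumes "E x y" shows "f x y \<noteq> 0"
proof
  assume "f x y = 0"
  then have "pc x y = 0" using weight_eq[OF assms] by simp
  then show False using p_pos assms by force
qed

lemma lam_minus_u_nonzero: "lam - u x \<noteq> 0"
  using f_ii by force

lemma one_minus_f_f_nonzero: "E x y \<Longrightarrow> 1 - f x y * f y x \<noteq> 0"
  using f_i by force

lemma fext_root_neq_0: "fext E f r x \<noteq> 0"
  using fext_root_nonzero f_nonzero by blast

lemma p_div_f: assumes "E x y" shows "pc x y / f x y - pc x y * f y x = lam - u x"
proof -
  have "pc x y = (lam - u x + pc x y * f y x) * f x y" using weight_eq[OF assms] by (simp add: algebra_simps)
  then show ?thesis using f_nonzero[OF assms] by (simp add: field_simps)
qed

lemma f_div_one_minus_f_f: assumes "E x y" shows "f x y / (1 - f x y * f y x) = pc x y / (lam - u x)"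
proof -
  have "f x y * (lam - u x) = pc x y * (1 - f x y * f y x)" using weight_eq[OF assms] by (simp add: algebra_simps)
  then show ?thesis using one_minus_f_f_nonzero[OF assms] lam_minus_u_nonzero[of x] by (simp add: field_simps)
qed

lemma u_has_sum_children:
  "((\<lambda>y. pc x y * f y x) has_sum (if x = r then u x else u x - pc x (parent x) * f (parent x) x))
     (children E r x)"
proof -
  have "(\<lambda>v. pc x v * f v x) summable_on {v. E x v}"
    by (rule abs_summable_summable) (use f_ii in blast)
  then have "((\<lambda>v. pc x v * f v x) has_sum u x) {v. E x v}" unfolding uval_def by (rule has_sum_infsum)
  then show ?thesis unfolding has_sum_adj_iff .
qed

lemma u_norm_summable_children: "(\<lambda>y. norm (pc x y * f y x)) summable_on children E r x"
  using f_ii summable_on_adj_iff by blast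

text \<open>The values \<open>\<nu>\<^sup>h(\<partial>T\<^sub>x)\<close> of the distribution representing \<open>h\<close>.\<close>
definition boundary_flow :: "('a \<Rightarrow> complex) \<Rightarrow> 'a \<Rightarrow> complex" where
  "boundary_flow h x = (if x = r then h r else
     fext E f r x * (h x - fext E f x (parent x) * h (parent x)) /
       (1 - fext E f (parent x) x * fext E f x (parent x)))"

lemma boundary_flow_kernel_transform: "boundary_flow (kernel_transform f \<mu>) x = \<mu> x"
proof (cases "x = r")
  case True
  then show ?thesis unfolding boundary_flow_def by (simp add: kernel_transform_root)
next
  case False
  let ?p = "parent x" and ?h = "kernel_transform f \<mu>"
  have x: "x \<in> children E r ?p" using False unfolding children_iff by blast
  have e: "E x ?p" "E ?p x" using adj_parent[OF False] adj_sym by blast+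
  have F: "fext E f r x = fext E f r ?p * f ?p x" using fext_root_child[OF x] .
  have nz: "fext E f r ?p \<noteq> 0" "f ?p x \<noteq> 0" "1 - f ?p x * f x ?p \<noteq> 0"
    using fext_root_neq_0 f_nonzero e one_minus_f_f_nonzero[OF e(2)] by auto
  have "?h x = f x ?p * ?h ?p + \<mu> x * (1 / fext E f r x - f x ?p / fext E f r ?p)"
    using kernel_transform_child[OF x] .
  then have "?h x - f x ?p * ?h ?p = \<mu> x * (1 - f ?p x * f x ?p) / fext E f r x"
    using F nz by (simp add: field_simps)
  then have "\<mu> x = fext E f r x * (?h x - f x ?p * ?h ?p) / (1 - f ?p x * f x ?p)"
    using nz F by (simp add: field_simps)
  then show ?thesis unfolding boundary_flow_def using False fext_edge[OF e(1)] fext_edge[OF e(2)] by simp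
qed

lemma kernel_transform_boundary_flow: "kernel_transform f (boundary_flow h) x = h x"
proof (induction x rule: measure_induct_rule[of "\<lambda>x. length (rpath x)"])
  case (less x)
  show ?case
  proof (cases "x = r")
    case True
    then show ?thesis using kernel_transform_root unfolding boundary_flow_def by simp
  next
    case False
    let ?p = "parent x" and ?F = "fext E f r (parent x)"
    have x: "x \<in> children E r ?p" using False unfolding children_iff by blast
    have e: "E x ?p" "E ?p x" using adj_parent[OF False] adj_sym by blast+
    have nz: "?F \<noteq> 0" "f ?p x \<noteq> 0" "1 - f ?p x * f x ?p \<noteq> 0"
      using fext_root_neq_0 f_nonzero e one_minus_f_f_nonzero[OF e(2)] by auto
    have F: "fext E f r x = ?F * f ?p x" using fext_root_child[OF x] .
    have IH: "kernel_transform f (boundary_flow h) ?p = h ?p"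
      using less length_rpath_parent[OF False] by simp
    have bf: "boundary_flow h x = ?F * f ?p x * (h x - f x ?p * h ?p) / (1 - f ?p x * f x ?p)"
      unfolding boundary_flow_def using False fext_edge[OF e(1)] fext_edge[OF e(2)] F by simp
    have "1 / (?F * f ?p x) - f x ?p / ?F = (1 - f ?p x * f x ?p) / (?F * f ?p x)"
      using nz by (simp add: field_simps)
    then have "f x ?p * h ?p + boundary_flow h x * (1 / fext E f r x - f x ?p / ?F) = h x"
      unfolding bf F using nz by simp
    then show ?thesis using kernel_transform_child[OF x] IH by simp
  qed
qed

end

context lambda_weights
begin

lemma weighted_kernel_transform_child:
  assumes y: "y \<in> children E r x"
  shows "pc x y * kernel_transform f \<mu> y =
           kernel_transform f \<mu> x * (pc x y * f y x) + (lam - u x) / fext E f r x * \<mu> y"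
proof -
  let ?h = "kernel_transform f \<mu>"
  have e: "E x y" using adj_child[OF y] .
  have "pc x y * (1 / fext E f r y - f y x / fext E f r x) = (pc x y / f x y - pc x y * f y x) / fext E f r x"
    using fext_root_child[OF y] f_nonzero[OF e] fext_root_neq_0[of x] by (simp add: field_simps)
  also have "\<dots> = (lam - u x) / fext E f r x" using p_div_f[OF e] by simp
  finally have k: "pc x y * (1 / fext E f r y - f y x / fext E f r x) = (lam - u x) / fext E f r x" .
  have "pc x y * ?h y = ?h x * (pc x y * f y x) + \<mu> y * (pc x y * (1 / fext E f r y - f y x / fext E f r x))"
    unfolding kernel_transform_child[OF y] by (simp add: algebra_simps)
  then show ?thesis unfolding k by (simp add: mult.commute)
qed

lemma kernel_transform_has_sum_children:
  assumes "(\<mu> has_sum \<mu> x) (children E r x)"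
  shows "((\<lambda>y. pc x y * kernel_transform f \<mu> y) has_sum
           kernel_transform f \<mu> x * (if x = r then u x else u x - pc x (parent x) * f (parent x) x)
             + (lam - u x) / fext E f r x * \<mu> x) (children E r x)"
proof -
  have "((\<lambda>y. kernel_transform f \<mu> x * (pc x y * f y x) + (lam - u x) / fext E f r x * \<mu> y) has_sum
           kernel_transform f \<mu> x * (if x = r then u x else u x - pc x (parent x) * f (parent x) x)
             + (lam - u x) / fext E f r x * \<mu> x) (children E r x)"
    by (intro has_sum_add has_sum_cmult_right u_has_sum_children assms)
  then show ?thesis using weighted_kernel_transform_child by (subst has_sum_cong) auto
qed

text \<open>At the root this is \<open>f(o,o) = 1\<close>; elsewhere it is the edge equation (iii) for \<open>(x, x\<^sup>-)\<close>
  combined with the recursion for \<^const>\<open>kernel_transform\<close>.\<close>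
lemma kernel_transform_eigen_identity:
  "kernel_transform f \<mu> x * (if x = r then u x else u x - pc x (parent x) * f (parent x) x)
     + (lam - u x) / fext E f r x * \<mu> x
   = (if x = r then lam * kernel_transform f \<mu> x
      else lam * kernel_transform f \<mu> x - pc x (parent x) * kernel_transform f \<mu> (parent x))"
proof (cases "x = r")
  case True
  then show ?thesis by (simp add: kernel_transform_root fext_refl algebra_simps)
next
  case False
  let ?p = "parent x" and ?h = "kernel_transform f \<mu>" and ?F = "fext E f r (parent x)"
  let ?a = "f x ?p" and ?b = "f ?p x" and ?q = "pc x ?p"
  have x: "x \<in> children E r ?p" using False unfolding children_iff by blast
  have e: "E x ?p" "E ?p x" using adj_parent[OF False] adj_sym by blast+
  have nz: "?a \<noteq> 0" "?b \<noteq> 0" "?F \<noteq> 0" using f_nonzero e fext_root_neq_0 by auto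
  have F: "fext E f r x = ?F * ?b" using fext_root_child[OF x] .
  have "?h x = ?a * ?h ?p + \<mu> x * (1 / (?F * ?b) - ?a / ?F)"
    using kernel_transform_child[OF x, of f \<mu>] F by simp
  then have hp: "?h ?p = ?h x / ?a - \<mu> x * (1 / (?a * ?F * ?b) - 1 / ?F)"
    using nz by (simp add: field_simps)
  have lam: "lam = ?q / ?a - ?q * ?b + u x" using p_div_f[OF e(1)] by (simp add: algebra_simps)
  show ?thesis using False nz by (simp add: F hp lam field_simps)
qed

lemma kernel_transform_norm_summable:
  assumes "(\<lambda>y. norm (\<mu> y)) summable_on children E r x"
  shows "(\<lambda>y. norm (pc x y * kernel_transform f \<mu> y)) summable_on {y. E x y}"
proof -
  let ?h = "kernel_transform f \<mu>" and ?c = "(lam - u x) / fext E f r x"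
  have "(\<lambda>y. norm (pc x y * ?h y)) summable_on children E r x"
  proof (rule Infinite_Sum.abs_summable_on_comparison_test')
    show "(\<lambda>y. norm (?h x) * norm (pc x y * f y x) + norm ?c * norm (\<mu> y)) summable_on children E r x"
      using u_norm_summable_children assms by (intro summable_on_add summable_on_cmult_right)
    fix y assume y: "y \<in> children E r x"
    have "norm (pc x y * ?h y) = norm (?h x * (pc x y * f y x) + ?c * \<mu> y)"
      using weighted_kernel_transform_child[OF y] by (simp only:)
    also have "\<dots> \<le> norm (?h x * (pc x y * f y x)) + norm (?c * \<mu> y)" by (rule norm_triangle_ineq)
    finally show "norm (pc x y * ?h y) \<le> norm (?h x) * norm (pc x y * f y x) + norm ?c * norm (\<mu> y)"
      by (simp only: norm_mult)
  qed
  then show ?thesis using summable_on_adj_iff by blast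
qed

lemma eigenfunction_kernel_transform:
  assumes "\<And>x. (\<mu> has_sum \<mu> x) (children E r x)" and "\<And>x. (\<lambda>y. norm (\<mu> y)) summable_on children E r x"
  shows "is_eigenfunction E p lam (kernel_transform f \<mu>)"
  unfolding is_eigenfunction_def
proof (intro allI conjI)
  fix x
  let ?h = "kernel_transform f \<mu>"
  show "(\<lambda>y. norm (pc x y * ?h y)) summable_on {y. E x y}"
    using kernel_transform_norm_summable assms(2) .
  have "((\<lambda>y. pc x y * ?h y) has_sum lam * ?h x) {y. E x y}"
    using kernel_transform_has_sum_children[OF assms(1)]
    unfolding kernel_transform_eigen_identity has_sum_adj_iff .
  then show "(\<Sum>\<^sub>\<infinity>y\<in>{y. E x y}. pc x y * ?h y) = lam * ?h x" by (rule infsumI)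
qed

lemma boundary_flow_child:
  assumes y: "y \<in> children E r x"
  shows "boundary_flow h y = fext E f r x / (lam - u x) * (pc x y * h y - h x * (pc x y * f y x))"
proof -
  have yr: "y \<noteq> r" "parent y = x" using y unfolding children_iff by auto
  have e: "E x y" "E y x" using adj_child[OF y] adj_sym by blast+
  have "boundary_flow h y = fext E f r x * (f x y / (1 - f x y * f y x)) * (h y - f y x * h x)"
    unfolding boundary_flow_def using yr fext_edge[OF e(1)] fext_edge[OF e(2)] fext_root_child[OF y]
    by (simp add: mult.commute)
  also have "\<dots> = fext E f r x * (pc x y / (lam - u x)) * (h y - f y x * h x)"
    using f_div_one_minus_f_f[OF e(1)] by simp
  finally show ?thesis using lam_minus_u_nonzero[of x] by (simp add: field_simps)
qed

lemma eigenfunction_has_sum: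
  assumes "is_eigenfunction E p lam h" shows "((\<lambda>y. pc x y * h y) has_sum lam * h x) {y. E x y}"
proof -
  have "(\<lambda>y. pc x y * h y) summable_on {y. E x y}"
    by (rule abs_summable_summable) (use assms in \<open>simp add: is_eigenfunction_def\<close>)
  then have "((\<lambda>y. pc x y * h y) has_sum (\<Sum>\<^sub>\<infinity>y\<in>{y. E x y}. pc x y * h y)) {y. E x y}"
    by (rule has_sum_infsum)
  then show ?thesis using assms unfolding is_eigenfunction_def by simp
qed

lemma boundary_flow_eigen_identity:
  "fext E f r x / (lam - u x) *
     ((if x = r then lam * h x else lam * h x - pc x (parent x) * h (parent x))
      + (- h x) * (if x = r then u x else u x - pc x (parent x) * f (parent x) x))
   = boundary_flow h x"
proof (cases "x = r")
  case True
  have "lam * h r + (- h r) * u r = (lam - u r) * h r" by (simp add: algebra_simps)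
  then show ?thesis unfolding boundary_flow_def using True lam_minus_u_nonzero[of r] by (simp add: fext_refl)
next
  case False
  let ?p = "parent x" and ?F = "fext E f r x"
  have e: "E x ?p" "E ?p x" using adj_parent[OF False] adj_sym by blast+
  have q: "pc x ?p / (lam - u x) = f x ?p / (1 - f x ?p * f ?p x)"
    using f_div_one_minus_f_f[OF e(1)] by simp
  have "lam * h x - pc x ?p * h ?p + (- h x) * (u x - pc x ?p * f ?p x)
          = (lam - u x) * h x + pc x ?p * (f ?p x * h x - h ?p)"
    by (simp add: algebra_simps)
  then have "?F / (lam - u x) * (lam * h x - pc x ?p * h ?p + (- h x) * (u x - pc x ?p * f ?p x))
      = ?F * h x + ?F * (pc x ?p / (lam - u x)) * (f ?p x * h x - h ?p)"
    using lam_minus_u_nonzero[of x] by (simp add: divide_simps) (simp add: algebra_simps)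
  also have "\<dots> = ?F * (h x - f x ?p * h ?p) / (1 - f ?p x * f x ?p)"
    unfolding q using one_minus_f_f_nonzero[OF e(1)] by (simp add: field_simps)
  also have "\<dots> = boundary_flow h x"
    unfolding boundary_flow_def using False fext_edge[OF e(1)] fext_edge[OF e(2)] by simp
  finally show ?thesis using False by simp
qed

lemma boundary_flow_has_sum:
  assumes "is_eigenfunction E p lam h"
  shows "(boundary_flow h has_sum boundary_flow h x) (children E r x)"
proof -
  let ?K = "fext E f r x / (lam - u x)"
  let ?S1 = "if x = r then lam * h x else lam * h x - pc x (parent x) * h (parent x)"
  let ?S2 = "if x = r then u x else u x - pc x (parent x) * f (parent x) x"
  have "((\<lambda>y. pc x y * h y) has_sum ?S1) (children E r x)"
    using eigenfunction_has_sum[OF assms] unfolding has_sum_adj_iff .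
  then have "((\<lambda>y. ?K * (pc x y * h y + (- h x) * (pc x y * f y x))) has_sum ?K * (?S1 + (- h x) * ?S2))
               (children E r x)"
    by (intro has_sum_cmult_right has_sum_add u_has_sum_children)
  then show ?thesis
    unfolding boundary_flow_eigen_identity using boundary_flow_child by (subst has_sum_cong) auto
qed

lemma boundary_flow_norm_summable:
  assumes eig: "is_eigenfunction E p lam h"
  shows "(\<lambda>y. norm (boundary_flow h y)) summable_on children E r x"
proof -
  let ?K = "fext E f r x / (lam - u x)"
  have "(\<lambda>y. norm (pc x y * h y)) summable_on children E r x"
    using eig summable_on_adj_iff unfolding is_eigenfunction_def by blast
  then have "(\<lambda>y. norm ?K * (norm (pc x y * h y) + norm (h x) * norm (pc x y * f y x)))
               summable_on children E r x"
    by (intro summable_on_cmult_right summable_on_add u_norm_summable_children)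
  then show ?thesis
  proof (rule Infinite_Sum.abs_summable_on_comparison_test')
    fix y assume y: "y \<in> children E r x"
    have "norm (boundary_flow h y) = norm ?K * norm (pc x y * h y - h x * (pc x y * f y x))"
      using boundary_flow_child[OF y] by (simp only: norm_mult)
    also have "\<dots> \<le> norm ?K * (norm (pc x y * h y) + norm (h x) * norm (pc x y * f y x))"
      using norm_triangle_ineq4[of "pc x y * h y" "h x * (pc x y * f y x)"]
      by (intro mult_left_mono) (auto simp: norm_mult)
    finally show "norm (boundary_flow h y) \<le> norm ?K * (norm (pc x y * h y) + norm (h x) * norm (pc x y * f y x))" .
  qed
qed

lemma represented_eq_kernel_transform:
  assumes \<nu>: "strong_distribution E r \<nu>" and h: "\<forall>x. h x = dist_integral E r \<nu> (kernel E r f x)"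
  shows "h = kernel_transform f (\<lambda>v. \<nu> (bd v))"
proof -
  have "is_distribution E r \<nu>" using \<nu> unfolding strong_distribution_def by blast
  then show ?thesis using h by (simp add: fun_eq_iff dist_integral_kernel)
qed

lemma represented_bdT:
  assumes "strong_distribution E r \<nu>" "\<forall>x. h x = dist_integral E r \<nu> (kernel E r f x)"
  shows "\<nu> (bd x) = boundary_flow h x"
  using represented_eq_kernel_transform[OF assms] boundary_flow_kernel_transform by simp

lemma eigenfunction_if_represented:
  assumes \<nu>: "strong_distribution E r \<nu>" and "\<forall>x. h x = dist_integral E r \<nu> (kernel E r f x)"
  shows "is_eigenfunction E p lam h"
  unfolding represented_eq_kernel_transform[OF assms]
  using \<nu> by (intro eigenfunction_kernel_transform) (auto simp: strong_distribution_def)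

text \<open>Only this direction needs the absence of leaves: it makes every \<open>\<partial>T\<^sub>v\<close> nonempty,
  so that the flow \<^const>\<open>boundary_flow\<close> defines a distribution.\<close>
lemma representation_exists:
  assumes "no_leaves E" and eig: "is_eigenfunction E p lam h"
  obtains \<nu> where "strong_distribution E r \<nu>" "\<forall>x. h x = dist_integral E r \<nu> (kernel E r f x)"
proof -
  interpret end_flow E r "boundary_flow h"
    using assms(1) boundary_flow_has_sum[OF eig] by unfold_locales auto
  have "strong_distribution E r flow_dist"
    using strong_distribution_flow_dist boundary_flow_norm_summable[OF eig] by blast
  moreover have "h x = dist_integral E r flow_dist (kernel E r f x)" for x
    using dist_integral_kernel[OF is_distribution_flow_dist] flow_dist_bdT kernel_transform_boundary_flow
    by simp
  ultimately show thesis using that by blast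
qed

end

theorem theorem3p4:
  fixes E :: "'a \<Rightarrow> 'a \<Rightarrow> bool" and r :: 'a
    and p :: "'a \<Rightarrow> 'a \<Rightarrow> real" and f :: "'a \<Rightarrow> 'a \<Rightarrow> complex"
    and lam :: complex and h :: "'a \<Rightarrow> complex"
  assumes countable: "countable (UNIV :: 'a set)"
    and tree: "is_tree E"
    and noleaf: "no_leaves E"
    and p_nonneg: "\<forall>x y. p x y \<ge> 0"
    and p_pos: "\<forall>x y. p x y > 0 \<longleftrightarrow> E x y"
    and p_stoch: "\<forall>x. (p x has_sum 1) UNIV"
    and f_i: "\<forall>x y. E x y \<longrightarrow> f x y * f y x \<noteq> 1"
    and f_ii: "\<forall>x. ((\<lambda>v. norm (complex_of_real (p x v) * f v x)) summable_on {v. E x v})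
                  \<and> uval E p f x \<noteq> lam"
    and f_iii: "\<forall>x y. E x y \<longrightarrow>
         lam * f x y = complex_of_real (p x y)
                       + (uval E p f x - complex_of_real (p x y) * f y x) * f x y"
  shows "(is_eigenfunction E p lam h \<longleftrightarrow>
           (\<exists>\<nu>. strong_distribution E r \<nu> \<and>
                (\<forall>x. h x = dist_integral E r \<nu> (kernel E r f x))))
    \<and> (\<forall>\<nu>. strong_distribution E r \<nu> \<and>
              (\<forall>x. h x = dist_integral E r \<nu> (kernel E r f x)) \<longrightarrow>
           \<nu> (ends E) = h r \<and>
           (\<forall>x. x \<noteq> r \<longrightarrow>
              \<nu> (bdT E r x) = fext E f r x *
                 (h x - fext E f x (pred_v E r x) * h (pred_v E r x)) /
                 (1 - fext E f (pred_v E r x) x * fext E f x (pred_v E r x))))"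
proof -
  interpret lambda_weights E r p f lam
    by unfold_locales (use tree p_pos f_i f_ii f_iii in auto)
  have "is_eigenfunction E p lam h \<longleftrightarrow>
          (\<exists>\<nu>. strong_distribution E r \<nu> \<and> (\<forall>x. h x = dist_integral E r \<nu> (kernel E r f x)))"
    using representation_exists[OF noleaf] eigenfunction_if_represented by metis
  moreover have "\<nu> (ends E) = h r \<and> (\<forall>x. x \<noteq> r \<longrightarrow> \<nu> (bdT E r x) = boundary_flow h x)"
    if \<nu>: "strong_distribution E r \<nu>" "\<forall>x. h x = dist_integral E r \<nu> (kernel E r f x)" for \<nu>
    using represented_bdT[OF \<nu>] represented_bdT[OF \<nu>, of r] bdT_root
    by (simp add: boundary_flow_def)
  ultimately show ?thesis unfolding boundary_flow_def by auto
qed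

end
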